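(* Let $g\ge2$, $1\le k<g$, and let $\Gamma\subset\operatorname{Sp}(2g,\mathbb{Z})$ be a congruence subgroup. Let $A_1,\dots,A_k:\mathbb{H}_g\to\operatorname{Sym}_g(\mathbb{C})$ be holomorphic with \[ A_i(\gamma\cdot\tau)=\det(C\tau+D)\,(C\tau+D)\,A_i(\tau)\,{}^t(C\tau+D)\qquad(\gamma\in\Gamma,\ \tau\in\mathbb{H}_g), \] i.e. $A_i\in[\Gamma,\rho_1]$. Then $F=A_1\ast\dots\ast A_k$ (a matrix-valued function indexed by $P^*_{g-k}(X_g)$) is in $[\Gamma,\rho_k]$, i.e. \[ F(\gamma\cdot\tau)=\det(M)^{k+2}\,{}^t\big(\textstyle\bigwedge^{g-k}M\big)^{-1}\,F(\tau)\,\big(\textstyle\bigwedge^{g-k}M\big)^{-1},\qquad M=C\tau+D, \] for all $\gamma\in\Gamma$, $\tau\in\mathbb{H}_g$. (Here $\rho_k$ has highest weight $(k+2,\dots,k+2,k,\dots,k)$ with $k$ entries equal to $k+2$.)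
   Context: $\mathbb{H}_g$ is the Siegel upper half space; $\gamma=\begin{pmatrix}A&B\\C&D\end{pmatrix}\in\operatorname{Sp}(2g,\mathbb{Z})$ acts by $\gamma\cdot\tau=(A\tau+B)(C\tau+D)^{-1}$. $X_g=\{1,\dots,g\}$, $P^*_p(X)$ is the set of $p$-element subsets of $X$ written increasingly; $\bigwedge^pM$ is the matrix indexed by $P^*_p(X_g)$ with entries $(\bigwedge^pM)^I_J=\det M(I,J)$. For $A$ on $\bigwedge^p\mathbb{C}^g$, $B$ on $\bigwedge^q\mathbb{C}^g$ (matrices indexed by $P^*_p$, $P^*_q$), $p+q\le g$: \[ (A\sqcap B)^H_K=\binom{p+q}{p}^{-1}\sum_{I\in P^*_p(H),\,J\in P^*_p(K)}(-1)^{s_H(I)+s_K(J)}A^I_J\,B^{H\setminus I}_{K\setminus J}, \] with $s_H(I)$ the sum of positions of elements of $I$ within $H$; iterated products are left to right. For $g\times g$ matrices, $(A_1\ast\dots\ast A_k)^I_J=(-1)^{|I|_\Sigma+|J|_\Sigma}(A_1\sqcap\dots\sqcap A_k)^{X_g\setminus I}_{X_g\setminus J}$ for $I,J\in P^*_{g-k}(X_g)$, where $|I|_\Sigma$ is the sum of the elements of $I$. *)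

theory Defs
  imports "HOL-Analysis.Analysis"
begin

(* g x g matrices: index type 'n (finite, linearly ordered), g = CARD('n).
   The elements of 'n in increasing order play the role of X_g = {1,...,g}. *)

type_synonym ('a,'n) sqmat = "'a^'n^'n"

definition cmat :: "int^'n^'n \<Rightarrow> complex^'n^'n" where
  "cmat M = (\<chi> i j. of_int (M$i$j))"

definition cim :: "complex^'n^'n \<Rightarrow> real^'n^'n" where
  "cim M = (\<chi> i j. Im (M$i$j))"

definition siegel :: "(complex^'n::finite^'n) set" where
  "siegel = {\<tau>. transpose \<tau> = \<tau> \<and>
      (\<forall>x::real^'n. x \<noteq> 0 \<longrightarrow> x \<bullet> (cim \<tau> *v x) > 0)}"

(* Elements of Sp(2g,Z) written in g x g blocks gamma = (A,B,C,D);
   condition  ^t gamma J gamma = J  with J = [[0,I],[-I,0]], written blockwise. *)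
type_synonym 'n blk = "(int^'n^'n) \<times> (int^'n^'n) \<times> (int^'n^'n) \<times> (int^'n^'n)"

definition Sp :: "('n::finite) blk set" where
  "Sp = {(A,B,C,D).
      transpose A ** C - transpose C ** A = 0 \<and>
      transpose A ** D - transpose C ** B = mat 1 \<and>
      transpose B ** C - transpose D ** A = - mat 1 \<and>
      transpose B ** D - transpose D ** B = 0}"

definition blk_mult :: "('n::finite) blk \<Rightarrow> 'n blk \<Rightarrow> 'n blk" where
  "blk_mult \<gamma> \<delta> = (case \<gamma> of (A,B,C,D) \<Rightarrow> case \<delta> of (A',B',C',D') \<Rightarrow>
      (A ** A' + B ** C', A ** B' + B ** D', C ** A' + D ** C', C ** B' + D ** D'))"

definition blk_one :: "('n::finite) blk" where
  "blk_one = (mat 1, 0, 0, mat 1)"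

definition princ_cong :: "nat \<Rightarrow> ('n::finite) blk set" where
  "princ_cong N = {(A,B,C,D) \<in> Sp. \<forall>i j.
      int N dvd (A$i$j - (mat 1 :: int^'n^'n)$i$j) \<and> int N dvd B$i$j \<and>
      int N dvd C$i$j \<and> int N dvd (D$i$j - (mat 1 :: int^'n^'n)$i$j)}"

definition subgroup_Sp :: "('n::finite) blk set \<Rightarrow> bool" where
  "subgroup_Sp G \<longleftrightarrow> G \<subseteq> Sp \<and> blk_one \<in> G \<and>
     (\<forall>x\<in>G. \<forall>y\<in>G. blk_mult x y \<in> G) \<and>
     (\<forall>x\<in>G. \<exists>y\<in>G. blk_mult x y = blk_one \<and> blk_mult y x = blk_one)"

definition congruence_subgroup :: "('n::finite) blk set \<Rightarrow> bool" where
  "congruence_subgroup G \<longleftrightarrow> subgroup_Sp G \<and> (\<exists>N\<ge>1. princ_cong N \<subseteq> G)"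

definition aut_factor :: "('n::finite) blk \<Rightarrow> complex^'n^'n \<Rightarrow> complex^'n^'n" where
  "aut_factor \<gamma> \<tau> = (case \<gamma> of (A,B,C,D) \<Rightarrow> cmat C ** \<tau> + cmat D)"

definition sp_act :: "('n::finite) blk \<Rightarrow> complex^'n^'n \<Rightarrow> complex^'n^'n" where
  "sp_act \<gamma> \<tau> = (case \<gamma> of (A,B,C,D) \<Rightarrow>
      (cmat A ** \<tau> + cmat B) ** matrix_inv (cmat C ** \<tau> + cmat D))"

(* holomorphic on H_g: complex (Frechet) differentiable at every point of H_g
   (as a function on the open subset H_g of Sym_g(C)), i.e. real derivative
   within H_g which is complex linear *)
definition cscale :: "complex \<Rightarrow> complex^'n^'n \<Rightarrow> complex^'n^'n" where
  "cscale c M = (\<chi> i j. c * M$i$j)"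

definition holomorphic_siegel :: "(complex^'n^'n \<Rightarrow> complex^'n^'n) \<Rightarrow> bool" where
  "holomorphic_siegel f \<longleftrightarrow> (\<forall>\<tau>\<in>siegel. \<exists>L. (f has_derivative L) (at \<tau> within siegel)
        \<and> (\<forall>c h. L (cscale c h) = cscale c (L h)))"

definition sym_valued :: "(complex^'n^'n \<Rightarrow> complex^'n^'n) \<Rightarrow> bool" where
  "sym_valued f \<longleftrightarrow> (\<forall>\<tau>\<in>siegel. transpose (f \<tau>) = f \<tau>)"

definition modular_rho1 :: "('n::finite) blk set \<Rightarrow> (complex^'n^'n \<Rightarrow> complex^'n^'n) \<Rightarrow> bool" where
  "modular_rho1 G f \<longleftrightarrow> holomorphic_siegel f \<and> sym_valued f \<and>
     (\<forall>\<gamma>\<in>G. \<forall>\<tau>\<in>siegel. f (sp_act \<gamma> \<tau>) =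
        cscale (det (aut_factor \<gamma> \<tau>))
          (aut_factor \<gamma> \<tau> ** f \<tau> ** transpose (aut_factor \<gamma> \<tau>)))"

(* ---- matrices on exterior powers: indexed by subsets of 'n ---- *)
type_synonym 'n wmat = "'n set \<Rightarrow> 'n set \<Rightarrow> complex"

definition Pp :: "nat \<Rightarrow> ('n::finite) set set" where
  "Pp p = {I. card I = p}"

(* position (1-based) of i within H, H written increasingly *)
definition pos :: "'n::{finite,linorder} set \<Rightarrow> 'n \<Rightarrow> nat" where
  "pos H i = card {j\<in>H. j \<le> i}"

definition s_pos :: "'n::{finite,linorder} set \<Rightarrow> 'n set \<Rightarrow> nat" where
  "s_pos H I = (\<Sum>i\<in>I. pos H i)"

(* |I|_Sigma: sum of the elements of I, elements of X_g numbered 1..g *)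
definition sum_elems :: "'n::{finite,linorder} set \<Rightarrow> nat" where
  "sum_elems I = (\<Sum>i\<in>I. pos UNIV i)"

definition det_sub :: "((complex, 'n::{finite,linorder}) vec, 'n) vec \<Rightarrow> 'n set \<Rightarrow> 'n set \<Rightarrow> complex" where
  "det_sub M I J = (let rI = sorted_list_of_set I; rJ = sorted_list_of_set J; p = card I in
      \<Sum>\<pi>\<in>{\<pi>. \<pi> permutes {0..<p}}. of_int (sign \<pi>) * (\<Prod>t<p. M $ (rI ! t) $ (rJ ! \<pi> t)))"

definition ext_pow :: "nat \<Rightarrow> ((complex, 'n::{finite,linorder}) vec, 'n) vec \<Rightarrow> 'n wmat" where
  "ext_pow p M = (\<lambda>I J. if I \<in> Pp p \<and> J \<in> Pp p then det_sub M I J else 0)"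

definition wmult :: "nat \<Rightarrow> ('n::finite) wmat \<Rightarrow> 'n wmat \<Rightarrow> 'n wmat" where
  "wmult p X Y = (\<lambda>H K. \<Sum>L\<in>Pp p. X H L * Y L K)"

definition wid :: "nat \<Rightarrow> ('n::finite) wmat" where
  "wid p = (\<lambda>H K. if H \<in> Pp p \<and> K \<in> Pp p \<and> H = K then 1 else 0)"

definition wtrans :: "('n::finite) wmat \<Rightarrow> 'n wmat" where
  "wtrans X = (\<lambda>H K. X K H)"

definition winv :: "nat \<Rightarrow> ('n::finite) wmat \<Rightarrow> 'n wmat" where
  "winv p X = (THE Y. (\<forall>H\<in>Pp p. \<forall>K\<in>Pp p. wmult p X Y H K = wid p H K \<and> wmult p Y X H K = wid p H K)
                  \<and> (\<forall>H K. H \<notin> Pp p \<or> K \<notin> Pp p \<longrightarrow> Y H K = 0))"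

definition lift1 :: "((complex, 'n::{finite,linorder}) vec, 'n) vec \<Rightarrow> 'n wmat" where
  "lift1 M = ext_pow 1 M"

definition sqcap :: "nat \<Rightarrow> nat \<Rightarrow> 'n::{finite,linorder} wmat \<Rightarrow> 'n wmat \<Rightarrow> 'n wmat" where
  "sqcap p q X Y = (\<lambda>H K. if H \<in> Pp (p+q) \<and> K \<in> Pp (p+q) then
      (1 / of_nat ((p+q) choose p)) *
      (\<Sum>I\<in>{I. I \<subseteq> H \<and> card I = p}. \<Sum>J\<in>{J. J \<subseteq> K \<and> card J = p}.
         (-1) ^ (s_pos H I + s_pos K J) * X I J * Y (H - I) (K - J))
    else 0)"

(* A_1 sqcap ... sqcap A_m, left to right (on wedge^m); only m >= 1 is used *)
fun sqcap_prod :: "(nat \<Rightarrow> ((complex, 'n::{finite,linorder}) vec, 'n) vec) \<Rightarrow> nat \<Rightarrow> 'n wmat" where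
  "sqcap_prod A 0 = wid 0"
| "sqcap_prod A (Suc 0) = lift1 (A 1)"
| "sqcap_prod A (Suc (Suc m)) = sqcap (Suc m) 1 (sqcap_prod A (Suc m)) (lift1 (A (Suc (Suc m))))"

definition star_prod :: "(nat \<Rightarrow> ((complex, 'n::{finite,linorder}) vec, 'n) vec) \<Rightarrow> nat \<Rightarrow> 'n wmat" where
  "star_prod A k = (\<lambda>I J. if I \<in> Pp (CARD('n) - k) \<and> J \<in> Pp (CARD('n) - k) then
      (-1) ^ (sum_elems I + sum_elems J) * sqcap_prod A k (UNIV - I) (UNIV - J) else 0)"

end

theory Submission
  imports Defs
begin

text \<open>
  Put \<open>M = C\<tau> + D\<close>, so that \<open>A\<^sub>i(\<gamma>\<tau>) = det M \<cdot> M A\<^sub>i(\<tau>) \<^sup>tM\<close>. The product \<open>\<sqinter>\<close> is natural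
  under congruence by compound matrices,
  \<open>(\<And>\<^sup>pM X \<^sup>t\<And>\<^sup>pM) \<sqinter> (\<And>\<^sup>qM Y \<^sup>t\<And>\<^sup>qM) = \<And>\<^sup>p\<^sup>+\<^sup>qM (X \<sqinter> Y) \<^sup>t\<And>\<^sup>p\<^sup>+\<^sup>qM\<close>,
  because both sides expand, by the generalized Laplace expansion of minors along a set of
  rows, into the same sum of products of minors. Hence \<open>A\<^sub>1 \<sqinter> \<dots> \<sqinter> A\<^sub>k\<close> picks up
  \<open>det(M)\<^sup>k\<close> and a congruence by \<open>\<And>\<^sup>kM\<close>. Passing to complementary index sets, Jacobi's
  formula writes the complementary minors of \<open>M\<close> as \<open>det M\<close> times the entries of
  \<open>(\<And>\<^sup>g\<^sup>-\<^sup>kM)\<^sup>-\<^sup>1\<close>, which gives the remaining factor \<open>det(M)\<^sup>2\<close>. The matrix \<open>M\<close> is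
  invertible since \<open>Im \<tau>\<close> is positive definite and \<open>\<gamma>\<close> is symplectic.

  The Laplace expansion is proved combinatorially: minors are signed sums over bijections,
  the sign being the parity of the number of inversions; a pair of bijections
  \<open>I \<rightarrow> P\<close>, \<open>H - I \<rightarrow> Q\<close> merges into one map on \<open>H\<close>, which is a bijection onto
  \<open>P \<union> Q\<close> when \<open>P \<inter> Q = {}\<close>, and otherwise the terms cancel in pairs by exchanging
  the two preimages of a common value.
\<close>

section \<open>Inversions and the sign of a permutation\<close>

definition inversions :: "'a::linorder set \<Rightarrow> ('a \<Rightarrow> 'b::linorder) \<Rightarrow> nat" where
  "inversions A f = card {(a, b). a \<in> A \<and> b \<in> A \<and> a < b \<and> f b < f a}"

lemma inversions_cong: "(\<And>x. x \<in> A \<Longrightarrow> f x = g x) \<Longrightarrow> inversions A f = inversions A g"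
  unfolding inversions_def by (rule arg_cong[where f = card]) auto

lemma inversions_strict_mono_comp:
  assumes "strict_mono_on (f ` A) h"
  shows "inversions A (h \<circ> f) = inversions A f"
  unfolding inversions_def using strict_mono_on_less[OF assms]
  by (intro arg_cong[where f = card]) auto

lemma card_filter_eq_sum: "finite A \<Longrightarrow> card {x \<in> A. P x} = (\<Sum>x\<in>A. if P x then 1 else 0)"
  by (simp flip: sum.inter_filter)

lemma inversions_eq_sum:
  assumes "finite A"
  shows "inversions A f = (\<Sum>a\<in>A. \<Sum>b\<in>A. if a < b \<and> f b < f a then 1 else 0)"
proof -
  have "inversions A f = card {x \<in> A \<times> A. fst x < snd x \<and> f (snd x) < f (fst x)}"
    unfolding inversions_def by (rule arg_cong[where f = card]) auto
  also have "\<dots> = (\<Sum>(a, b)\<in>A \<times> A. if a < b \<and> f b < f a then 1 else 0)"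
    using assms by (simp add: card_filter_eq_sum case_prod_beta)
  finally show ?thesis by (simp add: sum.cartesian_product)
qed

lemma inversions_split:
  assumes "finite H" "I \<subseteq> H"
  shows "inversions H g = inversions I g + inversions (H - I) g
      + (\<Sum>a\<in>I. \<Sum>b\<in>H - I. if a < b \<and> g b < g a then 1 else 0)
      + (\<Sum>a\<in>I. \<Sum>b\<in>H - I. if b < a \<and> g a < g b then 1 else 0)"
proof -
  define F where "F = (\<lambda>a b. if a < b \<and> g b < g a then 1 else (0::nat))"
  have fin: "finite I" "finite (H - I)" using assms finite_subset by auto
  have split: "sum G H = sum G I + sum G (H - I)" for G :: "'a \<Rightarrow> nat"
    using sum.subset_diff[OF assms(2,1), of G] by simp
  have "inversions H g = (\<Sum>a\<in>H. \<Sum>b\<in>H. F a b)"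
    unfolding inversions_eq_sum[OF assms(1)] F_def ..
  also have "\<dots> = (\<Sum>a\<in>I. \<Sum>b\<in>H. F a b) + (\<Sum>a\<in>H - I. \<Sum>b\<in>H. F a b)"
    by (rule split)
  also have "\<dots> = inversions I g + inversions (H - I) g
      + (\<Sum>a\<in>I. \<Sum>b\<in>H - I. F a b) + (\<Sum>a\<in>H - I. \<Sum>b\<in>I. F a b)"
    unfolding split sum.distrib inversions_eq_sum[OF fin(1)] inversions_eq_sum[OF fin(2)] F_def
    by simp
  also have "(\<Sum>a\<in>H - I. \<Sum>b\<in>I. F a b) = (\<Sum>b\<in>I. \<Sum>a\<in>H - I. F a b)"
    by (rule sum.swap)
  finally show ?thesis by (simp add: F_def)
qed

definition cycle_shift :: "nat \<Rightarrow> nat \<Rightarrow> nat \<Rightarrow> nat" where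
  "cycle_shift m n t = (if t < m then t else if t < n then Suc t else if t = n then m else t)"

lemma cycle_shift_permutes_sign:
  "m + d = n \<Longrightarrow> cycle_shift m n permutes {0..<Suc n} \<and> sign (cycle_shift m n) = (-1) ^ d"
proof (induction d arbitrary: m)
  case 0
  have "cycle_shift n n = id" by (auto simp: cycle_shift_def fun_eq_iff)
  then show ?case using 0 permutes_id[of "{0..<Suc n}"] by (simp add: id_def)
next
  case (Suc d)
  then have mn: "m < n" by simp
  have step: "cycle_shift m n = Transposition.transpose m (Suc m) \<circ> cycle_shift (Suc m) n"
    using mn by (auto simp: cycle_shift_def fun_eq_iff Transposition.transpose_def)
  from Suc.IH[of "Suc m"] Suc.prems have IH:
    "cycle_shift (Suc m) n permutes {0..<Suc n}" "sign (cycle_shift (Suc m) n) = (-1) ^ d"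
    by auto
  have t: "Transposition.transpose m (Suc m) permutes {0..<Suc n}"
    using mn by (intro permutes_swap_id) auto
  have "cycle_shift m n permutes {0..<Suc n}"
    unfolding step by (rule permutes_compose[OF IH(1) t])
  moreover have "sign (cycle_shift m n) = (-1) ^ Suc d"
    unfolding step
    by (subst sign_compose)
      (use IH t permutes_imp_permutation[OF _ t] permutes_imp_permutation[OF _ IH(1)] in
        \<open>auto simp: sign_swap_id\<close>)
  ultimately show ?case by simp
qed

lemma permutes_atLeastLessThan_SucD:
  "p permutes {0..<Suc n} \<Longrightarrow> p n = n \<Longrightarrow> p permutes {0..<n}"
  unfolding permutes_def by (metis atLeastLessThan_iff less_Suc_eq)

lemma inversions_last:
  assumes \<pi>: "\<pi> permutes {0..<Suc n}"
  shows "inversions {0..<Suc n} \<pi> = inversions {0..<n} \<pi> + (n - \<pi> n)"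
proof -
  have last: "{0..<Suc n} - {0..<n} = {n}" by auto
  have split: "inversions {0..<Suc n} \<pi> = inversions {0..<n} \<pi> + inversions {n} \<pi>
      + (\<Sum>a\<in>{0..<n}. if \<pi> n < \<pi> a then 1 else 0)"
    using inversions_split[of "{0..<Suc n}" "{0..<n}" \<pi>] unfolding last by simp
  have "{(a, b). a \<in> {n} \<and> b \<in> {n} \<and> a < b \<and> \<pi> b < \<pi> a} = {}" by auto
  then have "inversions {n} \<pi> = 0" unfolding inversions_def by (simp only: card.empty)
  moreover have "(\<Sum>a\<in>{0..<n}. if \<pi> n < \<pi> a then 1 else 0) = card {a \<in> {0..<n}. \<pi> n < \<pi> a}"
    by (rule card_filter_eq_sum[symmetric]) simp
  moreover have "{a \<in> {0..<n}. \<pi> n < \<pi> a} = {a \<in> {0..<Suc n}. \<pi> n < \<pi> a}"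
    using less_Suc_eq by auto
  moreover have "card {a \<in> {0..<Suc n}. \<pi> n < \<pi> a} = card {v \<in> {0..<Suc n}. \<pi> n < v}"
  proof -
    have "\<pi> ` {a \<in> {0..<Suc n}. \<pi> n < \<pi> a} = \<pi> ` {0..<Suc n} \<inter> {v. \<pi> n < v}" by auto
    then have "\<pi> ` {a \<in> {0..<Suc n}. \<pi> n < \<pi> a} = {v \<in> {0..<Suc n}. \<pi> n < v}"
      using permutes_image[OF \<pi>] by auto
    moreover have "inj_on \<pi> {a \<in> {0..<Suc n}. \<pi> n < \<pi> a}"
      using permutes_inj_on[OF \<pi>] by (rule inj_on_subset) auto
    ultimately show ?thesis by (metis card_image)
  qed
  moreover have "{v \<in> {0..<Suc n}. \<pi> n < v} = {\<pi> n<..n}" by auto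
  ultimately show ?thesis using split by simp
qed

lemma sign_eq_inversions_nat:
  fixes n :: nat
  shows "\<pi> permutes {0..<n} \<Longrightarrow> sign \<pi> = (-1::int) ^ inversions {0..<n} \<pi>"
proof (induction n arbitrary: \<pi>)
  case 0
  then show ?case by (simp add: permutes_empty inversions_def)
next
  case (Suc n)
  define m where "m = \<pi> n"
  have "m \<le> n" using permutes_in_image[OF Suc.prems, of n] by (simp add: m_def)
  define \<rho> where "\<rho> = cycle_shift m n"
  have \<rho>: "\<rho> permutes {0..<Suc n}" "sign \<rho> = (-1) ^ (n - m)"
    using cycle_shift_permutes_sign[of m "n - m" n] \<open>m \<le> n\<close> by (auto simp: \<rho>_def)
  define \<pi>' where "\<pi>' = inv \<rho> \<circ> \<pi>"
  have "\<rho> n = m" using \<open>m \<le> n\<close> by (simp add: \<rho>_def cycle_shift_def)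
  then have "\<pi>' n = n" using permutes_inv_eq[OF \<rho>(1)] by (simp add: \<pi>'_def m_def)
  then have \<pi>': "\<pi>' permutes {0..<n}"
    using permutes_atLeastLessThan_SucD permutes_compose[OF Suc.prems permutes_inv[OF \<rho>(1)]]
    by (simp add: \<pi>'_def)
  have \<pi>_eq: "\<pi> = \<rho> \<circ> \<pi>'"
    unfolding \<pi>'_def using \<rho>(1) by (auto simp: fun_eq_iff permutes_inverses)
  have "strict_mono_on (\<pi>' ` {0..<n}) \<rho>"
    using permutes_image[OF \<pi>'] by (auto simp: strict_mono_on_def \<rho>_def cycle_shift_def)
  then have "inversions {0..<n} \<pi> = inversions {0..<n} \<pi>'"
    unfolding \<pi>_eq by (rule inversions_strict_mono_comp)
  then have "inversions {0..<Suc n} \<pi> = inversions {0..<n} \<pi>' + (n - m)"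
    using inversions_last[OF Suc.prems] by (simp add: m_def)
  moreover have "sign \<pi> = sign \<rho> * sign \<pi>'"
    unfolding \<pi>_eq
    by (rule sign_compose[OF permutes_imp_permutation[OF _ \<rho>(1)] permutes_imp_permutation[OF _ \<pi>']]) simp_all
  ultimately show ?case using \<rho>(2) Suc.IH[OF \<pi>'] by (simp add: power_add)
qed

definition sorted_nth :: "'a::linorder set \<Rightarrow> nat \<Rightarrow> 'a" where
  "sorted_nth A t = sorted_list_of_set A ! t"

lemma bij_betw_sorted_nth: "finite A \<Longrightarrow> bij_betw (sorted_nth A) {0..<card A} A"
proof -
  assume "finite A"
  then have "distinct (sorted_list_of_set A)" "set (sorted_list_of_set A) = A"
    "length (sorted_list_of_set A) = card A"
    by auto
  then show ?thesis
    unfolding sorted_nth_def atLeast0LessThan by (metis bij_betw_nth)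
qed

lemma strict_mono_on_sorted_nth: "strict_mono_on {0..<card A} (sorted_nth A)"
  unfolding strict_mono_on_def sorted_nth_def
  by (auto intro: sorted_wrt_nth_less[where P = "(<)"])

lemma sorted_nth_less_iff:
  "i < card A \<Longrightarrow> j < card A \<Longrightarrow> sorted_nth A i < sorted_nth A j \<longleftrightarrow> i < j"
  using strict_mono_on_less[OF strict_mono_on_sorted_nth] by simp

lemma inversions_reindex:
  assumes r: "bij_betw r X A" and mono: "strict_mono_on X r"
  shows "inversions A f = inversions X (f \<circ> r)"
proof -
  let ?SX = "{(a, b). a \<in> X \<and> b \<in> X \<and> a < b \<and> f (r b) < f (r a)}"
  let ?SA = "{(a, b). a \<in> A \<and> b \<in> A \<and> a < b \<and> f b < f a}"
  have "bij_betw (map_prod r r) ?SX ?SA"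
  proof (rule bij_betw_imageI)
    show "inj_on (map_prod r r) ?SX"
      using bij_betw_imp_inj_on[OF r] by (auto simp: inj_on_def)
    show "map_prod r r ` ?SX = ?SA"
    proof (intro equalityI subsetI)
      fix z assume "z \<in> map_prod r r ` ?SX"
      then show "z \<in> ?SA"
        using bij_betwE[OF r] strict_mono_on_less[OF mono] by auto
    next
      fix z assume "z \<in> ?SA"
      then obtain u v where z: "z = (u, v)" "u \<in> A" "v \<in> A" "u < v" "f v < f u" by auto
      obtain a b where "a \<in> X" "b \<in> X" "u = r a" "v = r b"
        using z(2,3) r unfolding bij_betw_def by blast
      with z show "z \<in> map_prod r r ` ?SX"
        using strict_mono_on_less[OF mono] by (auto intro!: image_eqI[where x = "(a, b)"])
    qed
  qed
  then show ?thesis unfolding inversions_def by (simp add: bij_betw_same_card)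
qed

lemma sign_eq_inversions:
  fixes p :: "'a::linorder \<Rightarrow> 'a"
  assumes A: "finite A" and p: "p permutes A"
  shows "sign p = (-1::int) ^ inversions A p"
proof -
  define n where "n = card A"
  define e where "e = sorted_nth A"
  have e: "bij_betw e {0..<n} A" unfolding e_def n_def by (rule bij_betw_sorted_nth[OF A])
  have e_mono: "strict_mono_on {0..<n} e" unfolding e_def n_def by (rule strict_mono_on_sorted_nth)
  define f where "f = inv_into {0..<n} e"
  have f: "bij_betw f A {0..<n}" unfolding f_def by (rule bij_betw_inv_into[OF e])
  define \<pi> where "\<pi> = map_permutation A f p"
  have \<pi>: "\<pi> permutes {0..<n}" unfolding \<pi>_def by (rule map_permutation_permutes[OF f p])
  have "sign \<pi> = sign p"
    unfolding \<pi>_def by (rule sign_map_permutation[OF bij_betw_imp_inj_on[OF f] p A])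
  have e\<pi>: "e (\<pi> t) = p (e t)" if "t \<in> {0..<n}" for t
  proof -
    have "e t \<in> A" "p (e t) \<in> A" using bij_betwE[OF e] that permutes_in_image[OF p] by auto
    moreover have "inv_into A f t = e t"
      using bij_betw_inv_into_left[OF f \<open>e t \<in> A\<close>] bij_betw_inv_into_left[OF e that]
      by (simp add: f_def)
    ultimately show ?thesis
      using f that bij_betw_inv_into_right[OF e]
      by (simp add: \<pi>_def map_permutation_def restrict_id_def bij_betw_def f_def)
  qed
  have "strict_mono_on (\<pi> ` {0..<n}) e" using permutes_image[OF \<pi>] e_mono by simp
  then have "inversions {0..<n} \<pi> = inversions {0..<n} (e \<circ> \<pi>)"
    by (rule inversions_strict_mono_comp[symmetric])
  also have "\<dots> = inversions {0..<n} (p \<circ> e)" by (rule inversions_cong) (simp add: e\<pi>)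
  also have "\<dots> = inversions A p" by (rule inversions_reindex[OF e e_mono, symmetric])
  finally show ?thesis using sign_eq_inversions_nat[OF \<pi>] \<open>sign \<pi> = sign p\<close> by simp
qed

section \<open>Minors as sums over bijections\<close>

definition bijections :: "'a set \<Rightarrow> 'b set \<Rightarrow> ('a \<Rightarrow> 'b) set" where
  "bijections I J = {f \<in> I \<rightarrow>\<^sub>E J. bij_betw f I J}"

lemma finite_bijections: "finite I \<Longrightarrow> finite J \<Longrightarrow> finite (bijections I J)"
  unfolding bijections_def by (rule finite_subset[of _ "I \<rightarrow>\<^sub>E J"]) (auto intro: finite_PiE)

lemma restrict_in_bijections: "bij_betw f I J \<Longrightarrow> restrict f I \<in> bijections I J"
  unfolding bijections_def using bij_betwE by (auto simp: bij_betw_cong[of I "restrict f I" f])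

text \<open>Unlike \<open>det_sub\<close>, which enumerates \<open>I\<close> and \<open>J\<close> increasingly, the sign is read off
  from the inversions of the bijection itself.\<close>
definition minor :: "(('a::comm_ring_1, 'n::{finite,linorder}) vec, 'n) vec \<Rightarrow> 'n set \<Rightarrow> 'n set \<Rightarrow> 'a" where
  "minor M I J = (\<Sum>f\<in>bijections I J. (-1) ^ inversions I f * (\<Prod>i\<in>I. M $ i $ f i))"

lemma bij_betw_permutes_bijections:
  fixes p :: nat
  assumes eI: "bij_betw eI {0..<p} I" and eJ: "bij_betw eJ {0..<p} J"
  shows "bij_betw (\<lambda>\<pi>. restrict (eJ \<circ> \<pi> \<circ> inv_into {0..<p} eI) I)
    {\<pi>. \<pi> permutes {0..<p}} (bijections I J)"
proof (rule bij_betwI[where g = "\<lambda>f t. if t < p then inv_into {0..<p} eJ (f (eI t)) else t"])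
  have fI: "bij_betw (inv_into {0..<p} eI) I {0..<p}" by (rule bij_betw_inv_into[OF eI])
  have fJ: "bij_betw (inv_into {0..<p} eJ) J {0..<p}" by (rule bij_betw_inv_into[OF eJ])
  show "(\<lambda>\<pi>. restrict (eJ \<circ> \<pi> \<circ> inv_into {0..<p} eI) I) \<in> {\<pi>. \<pi> permutes {0..<p}} \<rightarrow> bijections I J"
  proof
    fix \<pi> assume "\<pi> \<in> {\<pi>. \<pi> permutes {0..<p}}"
    then have "bij_betw (eJ \<circ> \<pi> \<circ> inv_into {0..<p} eI) I J"
      using bij_betw_trans[OF fI bij_betw_trans[OF permutes_imp_bij eJ]] by simp
    then show "restrict (eJ \<circ> \<pi> \<circ> inv_into {0..<p} eI) I \<in> bijections I J"
      by (rule restrict_in_bijections)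
  qed
  show "(\<lambda>f t. if t < p then inv_into {0..<p} eJ (f (eI t)) else t)
      \<in> bijections I J \<rightarrow> {\<pi>. \<pi> permutes {0..<p}}"
  proof
    fix f assume "f \<in> bijections I J"
    then have "bij_betw (inv_into {0..<p} eJ \<circ> f \<circ> eI) {0..<p} {0..<p}"
      using bij_betw_trans[OF eI bij_betw_trans[OF _ fJ]] by (simp add: bijections_def)
    then have "bij_betw (\<lambda>t. if t < p then inv_into {0..<p} eJ (f (eI t)) else t) {0..<p} {0..<p}"
      by (rule bij_betw_cong[THEN iffD2, rotated]) simp
    then show "(\<lambda>t. if t < p then inv_into {0..<p} eJ (f (eI t)) else t) \<in> {\<pi>. \<pi> permutes {0..<p}}"
      by (simp only: mem_Collect_eq) (rule bij_imp_permutes, simp_all)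
  qed
  fix \<pi> f
  show "(\<lambda>t. if t < p then inv_into {0..<p} eJ (restrict (eJ \<circ> \<pi> \<circ> inv_into {0..<p} eI) I (eI t)) else t) = \<pi>"
    if "\<pi> \<in> {\<pi>. \<pi> permutes {0..<p}}"
  proof
    fix t
    have \<pi>: "\<pi> permutes {0..<p}" using that by simp
    show "(if t < p then inv_into {0..<p} eJ (restrict (eJ \<circ> \<pi> \<circ> inv_into {0..<p} eI) I (eI t)) else t) = \<pi> t"
    proof (cases "t < p")
      case True
      then have "eI t \<in> I" "inv_into {0..<p} eI (eI t) = t" "\<pi> t \<in> {0..<p}"
        using bij_betwE[OF eI] bij_betw_inv_into_left[OF eI] permutes_in_image[OF \<pi>] by auto
      with True show ?thesis using bij_betw_inv_into_left[OF eJ] by simp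
    next
      case False
      then show ?thesis using permutes_not_in[OF \<pi>] by simp
    qed
  qed
  show "restrict (eJ \<circ> (\<lambda>t. if t < p then inv_into {0..<p} eJ (f (eI t)) else t) \<circ> inv_into {0..<p} eI) I = f"
    if "f \<in> bijections I J"
  proof
    fix x
    have f: "f \<in> I \<rightarrow>\<^sub>E J" using that by (simp add: bijections_def)
    show "restrict (eJ \<circ> (\<lambda>t. if t < p then inv_into {0..<p} eJ (f (eI t)) else t) \<circ> inv_into {0..<p} eI) I x = f x"
    proof (cases "x \<in> I")
      case True
      then have "inv_into {0..<p} eI x < p" "eI (inv_into {0..<p} eI x) = x" "f x \<in> J"
        using bij_betwE[OF fI] bij_betw_inv_into_right[OF eI] f by auto
      with True show ?thesis using bij_betw_inv_into_right[OF eJ] by simp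
    next
      case False
      with PiE_arb[OF f False] show ?thesis by simp
    qed
  qed
qed

lemma det_sub_eq_minor:
  fixes M :: "((complex, 'n::{finite,linorder}) vec, 'n) vec"
  assumes "card I = card J"
  shows "det_sub M I J = minor M I J"
proof -
  define p where "p = card I"
  define eI where "eI = sorted_nth I"
  define eJ where "eJ = sorted_nth J"
  have eI: "bij_betw eI {0..<p} I" "strict_mono_on {0..<p} eI"
    unfolding eI_def p_def by (simp_all add: bij_betw_sorted_nth strict_mono_on_sorted_nth)
  have eJ: "bij_betw eJ {0..<p} J" "strict_mono_on {0..<p} eJ"
    unfolding eJ_def p_def assms by (simp_all add: bij_betw_sorted_nth strict_mono_on_sorted_nth)
  define \<phi> where "\<phi> = (\<lambda>\<pi>. restrict (eJ \<circ> \<pi> \<circ> inv_into {0..<p} eI) I)"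
  have "det_sub M I J = (\<Sum>\<pi>\<in>{\<pi>. \<pi> permutes {0..<p}}. of_int (sign \<pi>) * (\<Prod>t\<in>{0..<p}. M $ eI t $ eJ (\<pi> t)))"
    unfolding det_sub_def Let_def eI_def eJ_def sorted_nth_def p_def atLeast0LessThan by simp
  also have "\<dots> = (\<Sum>\<pi>\<in>{\<pi>. \<pi> permutes {0..<p}}. (-1) ^ inversions I (\<phi> \<pi>) * (\<Prod>i\<in>I. M $ i $ \<phi> \<pi> i))"
  proof (rule sum.cong[OF refl])
    fix \<pi> assume "\<pi> \<in> {\<pi>. \<pi> permutes {0..<p}}"
    then have \<pi>: "\<pi> permutes {0..<p}" by simp
    have \<phi>_eI: "\<phi> \<pi> (eI t) = eJ (\<pi> t)" if "t \<in> {0..<p}" for t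
      using that bij_betwE[OF eI(1)] bij_betw_inv_into_left[OF eI(1)] by (simp add: \<phi>_def)
    have "inversions I (\<phi> \<pi>) = inversions {0..<p} (\<phi> \<pi> \<circ> eI)"
      by (rule inversions_reindex[OF eI])
    also have "\<dots> = inversions {0..<p} (eJ \<circ> \<pi>)"
      by (rule inversions_cong) (simp add: \<phi>_eI)
    also have "\<dots> = inversions {0..<p} \<pi>"
      by (rule inversions_strict_mono_comp) (simp add: permutes_image[OF \<pi>] eJ(2))
    finally have "of_int (sign \<pi>) = ((-1) ^ inversions I (\<phi> \<pi>) :: complex)"
      by (simp add: sign_eq_inversions_nat[OF \<pi>])
    moreover have "(\<Prod>i\<in>I. M $ i $ \<phi> \<pi> i) = (\<Prod>t\<in>{0..<p}. M $ eI t $ eJ (\<pi> t))"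
      by (simp add: prod.reindex_bij_betw[OF eI(1), symmetric] \<phi>_eI)
    ultimately show "of_int (sign \<pi>) * (\<Prod>t\<in>{0..<p}. M $ eI t $ eJ (\<pi> t))
        = (-1) ^ inversions I (\<phi> \<pi>) * (\<Prod>i\<in>I. M $ i $ \<phi> \<pi> i)"
      by simp
  qed
  also have "\<dots> = minor M I J"
    unfolding minor_def \<phi>_def by (rule sum.reindex_bij_betw[OF bij_betw_permutes_bijections[OF eI(1) eJ(1)]])
  finally show ?thesis .
qed

lemma det_sub_singleton: "det_sub M {a} {b} = M $ a $ b"
proof -
  have "{0..<Suc 0} = {0::nat}" by auto
  then show ?thesis unfolding det_sub_def Let_def by simp
qed

lemma bijections_UNIV: "bijections UNIV UNIV = {p. p permutes UNIV}"
  using bij_imp_permutes[of _ UNIV] by (auto simp: bijections_def permutes_imp_bij)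

lemma minor_UNIV: "minor M UNIV UNIV = det (M :: (('a::comm_ring_1, 'n::{finite,linorder}) vec, 'n) vec)"
  unfolding minor_def det_def bijections_UNIV
  by (rule sum.cong) (simp_all add: sign_eq_inversions)

lemma det_sub_UNIV: "det_sub M UNIV UNIV = det M"
  by (simp add: det_sub_eq_minor minor_UNIV)

lemma inversions_inv_into:
  assumes f: "bij_betw f I J"
  shows "inversions J (inv_into I f) = inversions I f"
proof -
  let ?SJ = "{(a, b). a \<in> J \<and> b \<in> J \<and> a < b \<and> inv_into I f b < inv_into I f a}"
  let ?SI = "{(a, b). a \<in> I \<and> b \<in> I \<and> a < b \<and> f b < f a}"
  have "bij_betw (\<lambda>(a, b). (inv_into I f b, inv_into I f a)) ?SJ ?SI"
  proof (rule bij_betw_byWitness[where f' = "\<lambda>(x, y). (f y, f x)"])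
    show "\<forall>z\<in>?SJ. (\<lambda>(x, y). (f y, f x)) ((\<lambda>(a, b). (inv_into I f b, inv_into I f a)) z) = z"
      using bij_betw_inv_into_right[OF f] by auto
    show "\<forall>z\<in>?SI. (\<lambda>(a, b). (inv_into I f b, inv_into I f a)) ((\<lambda>(x, y). (f y, f x)) z) = z"
      using bij_betw_inv_into_left[OF f] by auto
    show "(\<lambda>(a, b). (inv_into I f b, inv_into I f a)) ` ?SJ \<subseteq> ?SI"
      using bij_betwE[OF bij_betw_inv_into[OF f]] bij_betw_inv_into_right[OF f] by auto
    show "(\<lambda>(x, y). (f y, f x)) ` ?SI \<subseteq> ?SJ"
      using bij_betwE[OF f] bij_betw_inv_into_left[OF f] by auto
  qed
  then show ?thesis unfolding inversions_def by (rule bij_betw_same_card)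
qed

lemma bij_betw_restrict_inv_into:
  "bij_betw f I J \<Longrightarrow> bij_betw (restrict (inv_into I f) J) J I"
  by (rule bij_betw_cong[THEN iffD2, OF _ bij_betw_inv_into]) simp_all

lemma restrict_inv_into_involutive:
  assumes "f \<in> bijections I J"
  shows "restrict (inv_into J (restrict (inv_into I f) J)) I = f"
proof
  have f: "bij_betw f I J" "f \<in> I \<rightarrow>\<^sub>E J" using assms by (auto simp: bijections_def)
  fix x
  show "restrict (inv_into J (restrict (inv_into I f) J)) I x = f x"
  proof (cases "x \<in> I")
    case True
    then have "f x \<in> J" "restrict (inv_into I f) J (f x) = x"
      using bij_betwE[OF f(1)] bij_betw_inv_into_left[OF f(1), of x] True by auto
    then have "inv_into J (restrict (inv_into I f) J) x = f x"
      by (rule inv_into_f_eq[OF bij_betw_imp_inj_on[OF bij_betw_restrict_inv_into[OF f(1)]]])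
    with True show ?thesis by (simp only: restrict_apply')
  next
    case False
    with PiE_arb[OF f(2) False] show ?thesis by simp
  qed
qed

lemma bij_betw_bijections_inv:
  "bij_betw (\<lambda>f. restrict (inv_into I f) J) (bijections I J) (bijections J I)"
proof (rule bij_betwI[where g = "\<lambda>g. restrict (inv_into J g) I"])
  show "(\<lambda>f. restrict (inv_into I f) J) \<in> bijections I J \<rightarrow> bijections J I"
    by (intro Pi_I restrict_in_bijections bij_betw_inv_into) (simp add: bijections_def)
  show "(\<lambda>g. restrict (inv_into J g) I) \<in> bijections J I \<rightarrow> bijections I J"
    by (intro Pi_I restrict_in_bijections bij_betw_inv_into) (simp add: bijections_def)
qed (simp_all add: restrict_inv_into_involutive)

lemma minor_transpose: "minor (transpose M) I J = minor M J I"
proof -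
  have "minor M J I = (\<Sum>f\<in>bijections I J. (-1) ^ inversions J (restrict (inv_into I f) J)
      * (\<Prod>j\<in>J. M $ j $ restrict (inv_into I f) J j))"
    unfolding minor_def by (rule sum.reindex_bij_betw[OF bij_betw_bijections_inv, symmetric])
  also have "\<dots> = minor (transpose M) I J"
    unfolding minor_def
  proof (rule sum.cong[OF refl])
    fix f assume "f \<in> bijections I J"
    then have f: "bij_betw f I J" by (simp add: bijections_def)
    have "inversions J (restrict (inv_into I f) J) = inversions I f"
      by (simp add: inversions_inv_into[OF f, symmetric] cong: inversions_cong)
    moreover have "(\<Prod>j\<in>J. M $ j $ restrict (inv_into I f) J j) = (\<Prod>i\<in>I. M $ f i $ i)"
      using prod.reindex_bij_betw[OF f, of "\<lambda>j. M $ j $ restrict (inv_into I f) J j"]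
        bij_betwE[OF f] bij_betw_inv_into_left[OF f] by simp
    ultimately show "(-1) ^ inversions J (restrict (inv_into I f) J) * (\<Prod>j\<in>J. M $ j $ restrict (inv_into I f) J j)
        = (-1) ^ inversions I f * (\<Prod>i\<in>I. transpose M $ i $ f i)"
      by (simp add: transpose_def)
  qed
  finally show ?thesis ..
qed

lemma det_sub_transpose:
  "card I = card J \<Longrightarrow> det_sub (transpose M) I J = det_sub M J I"
  by (simp add: det_sub_eq_minor minor_transpose)

section \<open>The generalized Laplace expansion\<close>

definition less_pairs :: "'a::linorder set \<Rightarrow> 'a set \<Rightarrow> nat" where
  "less_pairs P Q = (\<Sum>x\<in>P. \<Sum>y\<in>Q. if x < y then 1 else 0)"

lemma s_pos_add_less_pairs:
  fixes H I :: "'a::{finite,linorder} set"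
  assumes "I \<subseteq> H"
  shows "s_pos H I + less_pairs I (H - I) = s_pos I I + card I * card (H - I)"
proof -
  have pos: "pos H a = pos I a + card {b\<in>H-I. b < a}" if a: "a \<in> I" for a
  proof -
    have "{j\<in>H. j \<le> a} = {j\<in>I. j \<le> a} \<union> {b\<in>H-I. b < a}"
      using a assms by (auto simp: order.order_iff_strict)
    moreover have "{j\<in>I. j \<le> a} \<inter> {b\<in>H-I. b < a} = {}" by auto
    ultimately show ?thesis unfolding pos_def by (simp add: card_Un_disjoint)
  qed
  have below_above: "card {b\<in>H-I. b < a} + (\<Sum>b\<in>H-I. if a < b then 1 else 0) = card (H-I)"
    if a: "a \<in> I" for a
  proof -
    have "card {b\<in>H-I. b < a} = (\<Sum>b\<in>H-I. if b < a then 1 else 0)"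
      by (rule card_filter_eq_sum) simp
    moreover have "(\<Sum>b\<in>H-I. (if b < a then 1 else 0) + (if a < b then 1 else 0)) = (\<Sum>b\<in>H-I. 1::nat)"
    proof (rule sum.cong[OF refl])
      fix b assume "b \<in> H - I"
      then have "b \<noteq> a" using a by auto
      then show "(if b < a then 1 else 0) + (if a < b then 1 else 0) = (1::nat)" by auto
    qed
    ultimately show ?thesis by (simp add: sum.distrib)
  qed
  have "s_pos H I = (\<Sum>a\<in>I. pos I a + card {b\<in>H-I. b < a})"
    unfolding s_pos_def by (rule sum.cong) (simp_all add: pos)
  also have "\<dots> = s_pos I I + (\<Sum>a\<in>I. card {b\<in>H-I. b < a})" by (simp add: sum.distrib s_pos_def)
  finally have "s_pos H I + less_pairs I (H - I)
      = s_pos I I + (\<Sum>a\<in>I. card {b\<in>H-I. b < a} + (\<Sum>b\<in>H-I. if a < b then 1 else 0))"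
    by (simp add: sum.distrib less_pairs_def)
  also have "\<dots> = s_pos I I + (\<Sum>a\<in>I. card (H-I))" using below_above by simp
  finally show ?thesis by simp
qed

lemma pos_sorted_nth:
  fixes A :: "'a::{finite,linorder} set"
  assumes "t < card A"
  shows "pos A (sorted_nth A t) = Suc t"
proof -
  have "{j \<in> A. j \<le> sorted_nth A t} = sorted_nth A ` {0..t}"
  proof (intro equalityI subsetI)
    fix j assume j: "j \<in> {j \<in> A. j \<le> sorted_nth A t}"
    then obtain s where s: "s < card A" "j = sorted_nth A s"
      using bij_betw_sorted_nth[of A] unfolding bij_betw_def by fastforce
    have "\<not> t < s" using j s sorted_nth_less_iff[OF assms s(1)] by auto
    then show "j \<in> sorted_nth A ` {0..t}" using s by auto
  next
    fix j assume "j \<in> sorted_nth A ` {0..t}"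
    then obtain s where s: "s \<le> t" "j = sorted_nth A s" by auto
    have "j \<in> A" using s assms bij_betwE[OF bij_betw_sorted_nth[of A]] by simp
    moreover have "j \<le> sorted_nth A t"
      using s sorted_nth_less_iff[of s A t] assms by (cases "s = t") auto
    ultimately show "j \<in> {j \<in> A. j \<le> sorted_nth A t}" by simp
  qed
  moreover have "inj_on (sorted_nth A) {0..t}"
    using assms by (intro inj_on_subset[OF bij_betw_imp_inj_on[OF bij_betw_sorted_nth]]) auto
  ultimately show ?thesis unfolding pos_def by (simp add: card_image)
qed

lemma s_pos_self: "s_pos (A::'a::{finite,linorder} set) A = (\<Sum>t<card A. Suc t)"
proof -
  have "s_pos A A = (\<Sum>t\<in>{0..<card A}. pos A (sorted_nth A t))"
    unfolding s_pos_def by (rule sum.reindex_bij_betw[OF bij_betw_sorted_nth, symmetric]) simp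
  also have "\<dots> = (\<Sum>t<card A. Suc t)" by (simp add: pos_sorted_nth atLeast0LessThan)
  finally show ?thesis .
qed

definition colliding_pairs :: "'a::linorder set \<Rightarrow> ('a \<Rightarrow> 'b) \<Rightarrow> 'a set \<Rightarrow> nat" where
  "colliding_pairs I g D = (\<Sum>a\<in>I. \<Sum>b\<in>D. if a < b \<and> g a = g b then 1 else 0)"

text \<open>The sign of a term of the Laplace expansion depends on the splitting \<open>I\<close> only through
  the colliding pairs of the merged map \<open>g\<close>.\<close>
lemma laplace_sign_parity:
  fixes H I P Q :: "'a::{finite,linorder} set" and g :: "'a \<Rightarrow> 'a"
  assumes IH: "I \<subseteq> H" and gI: "bij_betw g I P" and gD: "bij_betw g (H - I) Q"
  shows "(-1::'b::comm_ring_1) ^ (s_pos H I + inversions I g + inversions (H - I) g)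
       = (-1) ^ (s_pos P P + card P * card Q + less_pairs P Q + inversions H g
           + colliding_pairs I g (H - I))"
proof -
  define D where "D = H - I"
  define cnt where "cnt = (\<lambda>R. \<Sum>a\<in>I. \<Sum>b\<in>D. if R a b then 1 else (0::nat))"
  have cnt_add: "cnt R = cnt S + cnt T" if "\<And>a b. a \<in> I \<Longrightarrow> b \<in> D \<Longrightarrow>
      (if R a b then 1 else 0) = (if S a b then 1 else 0) + (if T a b then 1 else (0::nat))" for R S T
  proof -
    have "cnt R = (\<Sum>a\<in>I. \<Sum>b\<in>D. (if S a b then 1 else 0) + (if T a b then 1 else 0))"
      unfolding cnt_def using that by (intro sum.cong refl) blast
    then show ?thesis by (simp add: cnt_def sum.distrib)
  qed
  define C1 where "C1 = cnt (\<lambda>a b. a < b \<and> g b < g a)"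
  define C2 where "C2 = cnt (\<lambda>a b. b < a \<and> g a < g b)"
  define W where "W = cnt (\<lambda>a b. a < b \<and> g a < g b)"
  have "card I = card P" "card D = card Q"
    using bij_betw_same_card[OF gI] bij_betw_same_card[OF gD] by (simp_all add: D_def)
  then have sp: "s_pos H I + cnt (\<lambda>a b. a < b) = s_pos P P + card P * card Q"
    using s_pos_add_less_pairs[OF IH] s_pos_self[of I] s_pos_self[of P]
    by (simp add: cnt_def less_pairs_def D_def)
  have inv: "inversions H g = inversions I g + inversions D g + C1 + C2"
    using inversions_split[OF _ IH, of g] by (simp add: C1_def C2_def cnt_def D_def)
  have X: "cnt (\<lambda>a b. a < b) = C1 + W + colliding_pairs I g D"
  proof -
    have "cnt (\<lambda>a b. a < b) = cnt (\<lambda>a b. a < b \<and> g b < g a) + cnt (\<lambda>a b. a < b \<and> g b \<ge> g a)"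
      by (rule cnt_add) auto
    moreover have "cnt (\<lambda>a b. a < b \<and> g b \<ge> g a) = W + cnt (\<lambda>a b. a < b \<and> g a = g b)"
      unfolding W_def by (rule cnt_add) auto
    ultimately show ?thesis by (simp add: C1_def colliding_pairs_def cnt_def)
  qed
  have "less_pairs P Q = cnt (\<lambda>a b. g a < g b)"
    unfolding less_pairs_def cnt_def D_def
    by (simp add: sum.reindex_bij_betw[OF gI, symmetric] sum.reindex_bij_betw[OF gD, symmetric])
  also have "\<dots> = W + C2"
    unfolding W_def C2_def
    by (rule cnt_add) (auto simp: D_def)
  finally have Y: "less_pairs P Q = W + C2" .
  have key: "(s_pos H I + inversions I g + inversions D g) + 2 * (C1 + C2 + W + colliding_pairs I g D)
      = s_pos P P + card P * card Q + less_pairs P Q + inversions H g + colliding_pairs I g D"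
    using sp inv X Y by presburger
  have "(-1::'b) ^ (s_pos H I + inversions I g + inversions D g)
      = (-1) ^ ((s_pos H I + inversions I g + inversions D g) + 2 * (C1 + C2 + W + colliding_pairs I g D))"
    by (simp add: power_add power_mult)
  also have "\<dots> = (-1) ^ (s_pos P P + card P * card Q + less_pairs P Q + inversions H g
      + colliding_pairs I g D)"
    by (simp only: key)
  finally show ?thesis by (simp only: D_def)
qed

definition split_bijections :: "'a set \<Rightarrow> 'a set \<Rightarrow> 'a set \<Rightarrow> ('a set \<times> ('a \<Rightarrow> 'a)) set" where
  "split_bijections H P Q =
    {(I, g). I \<subseteq> H \<and> g \<in> H \<rightarrow>\<^sub>E P \<union> Q \<and> bij_betw g I P \<and> bij_betw g (H - I) Q}"

lemma restrict_merge:
  assumes "f1 \<in> I \<rightarrow>\<^sub>E P" "f2 \<in> H - I \<rightarrow>\<^sub>E Q"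
  shows "restrict (\<lambda>h. if h \<in> I then f1 h else f2 h) I = f1"
    and "restrict (\<lambda>h. if h \<in> I then f1 h else f2 h) (H - I) = f2"
proof
  show "restrict (\<lambda>h. if h \<in> I then f1 h else f2 h) I x = f1 x" for x
    by (cases "x \<in> I") (simp_all add: PiE_arb[OF assms(1)])
next
  show "restrict (\<lambda>h. if h \<in> I then f1 h else f2 h) (H - I) = f2"
  proof
    show "restrict (\<lambda>h. if h \<in> I then f1 h else f2 h) (H - I) x = f2 x" for x
      by (cases "x \<in> H - I") (auto simp: PiE_arb[OF assms(2)])
  qed
qed

lemma merge_restrict:
  assumes "I \<subseteq> H" "g \<in> H \<rightarrow>\<^sub>E R"
  shows "(\<lambda>h. if h \<in> I then restrict g I h else restrict g (H - I) h) = g"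
proof
  show "(if x \<in> I then restrict g I x else restrict g (H - I) x) = g x" for x
    using assms PiE_arb[OF assms(2), of x] by auto
qed

lemma bij_betw_merge_split_bijections:
  "bij_betw (\<lambda>(I, f1, f2). (I, \<lambda>h. if h \<in> I then f1 h else f2 h))
     (SIGMA I:{I. I \<subseteq> H \<and> card I = card P}. bijections I P \<times> bijections (H - I) Q)
     (split_bijections H P Q)"
proof (rule bij_betwI[where g = "\<lambda>(I, g). (I, restrict g I, restrict g (H - I))"])
  show "(\<lambda>(I, f1, f2). (I, \<lambda>h. if h \<in> I then f1 h else f2 h))
      \<in> (SIGMA I:{I. I \<subseteq> H \<and> card I = card P}. bijections I P \<times> bijections (H - I) Q)
        \<rightarrow> split_bijections H P Q"
  proof
    fix y assume "y \<in> (SIGMA I:{I. I \<subseteq> H \<and> card I = card P}. bijections I P \<times> bijections (H - I) Q)"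
    then obtain I f1 f2 where y: "y = (I, f1, f2)" and I: "I \<subseteq> H"
      and "f1 \<in> bijections I P" "f2 \<in> bijections (H - I) Q" by auto
    then have f1: "f1 \<in> I \<rightarrow>\<^sub>E P" "bij_betw f1 I P" and f2: "f2 \<in> H - I \<rightarrow>\<^sub>E Q" "bij_betw f2 (H - I) Q"
      by (simp_all add: bijections_def)
    let ?m = "\<lambda>h. if h \<in> I then f1 h else f2 h"
    have "bij_betw ?m I P" by (rule bij_betw_cong[THEN iffD2, OF _ f1(2)]) simp
    moreover have "bij_betw ?m (H - I) Q" by (rule bij_betw_cong[THEN iffD2, OF _ f2(2)]) simp
    moreover have "?m \<in> H \<rightarrow>\<^sub>E P \<union> Q"
    proof (rule PiE_I)
      show "?m x \<in> P \<union> Q" if "x \<in> H" for x using that f1(1) f2(1) by (cases "x \<in> I") auto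
      show "?m x = undefined" if "x \<notin> H" for x using that I PiE_arb[OF f2(1)] by auto
    qed
    ultimately show "(\<lambda>(I, f1, f2). (I, \<lambda>h. if h \<in> I then f1 h else f2 h)) y \<in> split_bijections H P Q"
      using I by (simp add: split_bijections_def y)
  qed
  show "(\<lambda>(I, g). (I, restrict g I, restrict g (H - I))) \<in> split_bijections H P Q
      \<rightarrow> (SIGMA I:{I. I \<subseteq> H \<and> card I = card P}. bijections I P \<times> bijections (H - I) Q)"
  proof
    fix z assume "z \<in> split_bijections H P Q"
    then obtain I g where "z = (I, g)" "I \<subseteq> H" "bij_betw g I P" "bij_betw g (H - I) Q"
      by (auto simp: split_bijections_def)
    then show "(\<lambda>(I, g). (I, restrict g I, restrict g (H - I))) z
        \<in> (SIGMA I:{I. I \<subseteq> H \<and> card I = card P}. bijections I P \<times> bijections (H - I) Q)"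
      by (simp add: bij_betw_same_card restrict_in_bijections)
  qed
  fix y z
  show "(\<lambda>(I, g). (I, restrict g I, restrict g (H - I)))
      ((\<lambda>(I, f1, f2). (I, \<lambda>h. if h \<in> I then f1 h else f2 h)) y) = y"
    if "y \<in> (SIGMA I:{I. I \<subseteq> H \<and> card I = card P}. bijections I P \<times> bijections (H - I) Q)"
  proof -
    obtain I f1 f2 where y: "y = (I, f1, f2)" by (rule prod_cases3)
    with that have "f1 \<in> I \<rightarrow>\<^sub>E P" "f2 \<in> H - I \<rightarrow>\<^sub>E Q" by (auto simp: bijections_def)
    then show ?thesis by (simp add: y restrict_merge)
  qed
  show "(\<lambda>(I, f1, f2). (I, \<lambda>h. if h \<in> I then f1 h else f2 h))
      ((\<lambda>(I, g). (I, restrict g I, restrict g (H - I))) z) = z"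
    if "z \<in> split_bijections H P Q"
  proof -
    obtain I g where z: "z = (I, g)" by (rule prod.exhaust)
    with that have "I \<subseteq> H" "g \<in> H \<rightarrow>\<^sub>E P \<union> Q" by (auto simp: split_bijections_def)
    then show ?thesis by (simp add: z merge_restrict)
  qed
qed

lemma laplace_sum_split_bijections:
  fixes M :: "(('a::comm_ring_1, 'n::{finite,linorder}) vec, 'n) vec"
  shows "(\<Sum>I | I \<subseteq> H \<and> card I = card P. (-1) ^ s_pos H I * minor M I P * minor M (H - I) Q)
     = (\<Sum>(I, g)\<in>split_bijections H P Q.
          (-1) ^ (s_pos H I + inversions I g + inversions (H - I) g) * (\<Prod>h\<in>H. M $ h $ g h))"
proof -
  define \<Sigma> where "\<Sigma> = (SIGMA I:{I. I \<subseteq> H \<and> card I = card P}. bijections I P \<times> bijections (H - I) Q)"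
  define F where "F = (\<lambda>(I, f1, f2). (-1) ^ s_pos H I
      * ((-1) ^ inversions I f1 * (\<Prod>i\<in>I. M $ i $ f1 i))
      * ((-1) ^ inversions (H - I) f2 * (\<Prod>i\<in>H - I. M $ i $ f2 i)))"
  define G where "G = (\<lambda>(I, g). (-1) ^ (s_pos H I + inversions I g + inversions (H - I) g)
      * (\<Prod>h\<in>H. M $ h $ g h))"
  have "(\<Sum>I | I \<subseteq> H \<and> card I = card P. (-1) ^ s_pos H I * minor M I P * minor M (H - I) Q)
      = (\<Sum>I | I \<subseteq> H \<and> card I = card P. \<Sum>f1\<in>bijections I P. \<Sum>f2\<in>bijections (H - I) Q. F (I, f1, f2))"
    unfolding minor_def F_def
    by (simp add: sum_distrib_left sum_distrib_right mult.assoc) (rule sum.cong[OF refl], rule sum.swap)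
  also have "\<dots> = (\<Sum>I | I \<subseteq> H \<and> card I = card P. \<Sum>x\<in>bijections I P \<times> bijections (H - I) Q. F (I, x))"
    by (rule sum.cong[OF refl], subst sum.cartesian_product) (simp add: case_prod_beta)
  also have "\<dots> = (\<Sum>y\<in>\<Sigma>. F y)"
    unfolding \<Sigma>_def by (subst sum.Sigma) (simp_all add: finite_bijections case_prod_beta)
  also have "\<dots> = (\<Sum>y\<in>\<Sigma>. G ((\<lambda>(I, f1, f2). (I, \<lambda>h. if h \<in> I then f1 h else f2 h)) y))"
  proof (rule sum.cong[OF refl])
    fix y assume "y \<in> \<Sigma>"
    then obtain I f1 f2 where y: "y = (I, f1, f2)" "I \<subseteq> H" by (cases y) (auto simp: \<Sigma>_def)
    let ?m = "\<lambda>h. if h \<in> I then f1 h else f2 h"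
    have "inversions I ?m = inversions I f1" "inversions (H - I) ?m = inversions (H - I) f2"
      by (auto intro: inversions_cong)
    moreover have "(\<Prod>h\<in>H. M $ h $ ?m h) = (\<Prod>h\<in>H - I. M $ h $ f2 h) * (\<Prod>h\<in>I. M $ h $ f1 h)"
      using prod.subset_diff[OF y(2), of "\<lambda>h. M $ h $ ?m h"] by simp
    ultimately show "F y = G ((\<lambda>(I, f1, f2). (I, \<lambda>h. if h \<in> I then f1 h else f2 h)) y)"
      by (simp add: y F_def G_def power_add mult_ac)
  qed
  also have "\<dots> = sum G (split_bijections H P Q)"
    unfolding \<Sigma>_def by (rule sum.reindex_bij_betw[OF bij_betw_merge_split_bijections])
  finally show ?thesis by (simp only: G_def)
qed

lemma colliding_pairs_eq_sum:
  fixes g :: "'a::{finite,linorder} \<Rightarrow> 'a"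
  assumes gI: "bij_betw g I P" and gD: "bij_betw g D Q"
  shows "colliding_pairs I g D = (\<Sum>x\<in>P \<inter> Q. if inv_into I g x < inv_into D g x then 1 else 0)"
proof -
  define G where "G = (\<lambda>x. if x \<in> Q then (if inv_into I g x < inv_into D g x then 1 else 0) else (0::nat))"
  have inner: "(\<Sum>b\<in>D. if a < b \<and> g a = g b then 1 else 0) = G (g a)" if a: "a \<in> I" for a
  proof (cases "g a \<in> Q")
    case True
    define b0 where "b0 = inv_into D g (g a)"
    have b0: "b0 \<in> D" "g b0 = g a"
      unfolding b0_def using True bij_betwE[OF bij_betw_inv_into[OF gD]] bij_betw_inv_into_right[OF gD]
      by auto
    have "g a = g b \<longleftrightarrow> b = b0" if "b \<in> D" for b
      using that b0 bij_betw_imp_inj_on[OF gD] unfolding inj_on_def by metis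
    then have "(\<Sum>b\<in>D. if a < b \<and> g a = g b then 1 else (0::nat))
        = (\<Sum>b\<in>D. if b = b0 then (if a < b0 then 1 else 0) else 0)"
      by (intro sum.cong) auto
    also have "\<dots> = (if a < b0 then 1 else 0)" using b0 by simp
    also have "\<dots> = G (g a)"
      using True bij_betw_inv_into_left[OF gI a] by (simp add: G_def b0_def)
    finally show ?thesis .
  next
    case False
    then have "g a \<noteq> g b" if "b \<in> D" for b using bij_betwE[OF gD] that by auto
    then show ?thesis using False by (simp add: G_def)
  qed
  have "colliding_pairs I g D = (\<Sum>a\<in>I. G (g a))" unfolding colliding_pairs_def using inner by simp
  also have "\<dots> = (\<Sum>x\<in>P. G x)" by (rule sum.reindex_bij_betw[OF gI])
  also have "\<dots> = (\<Sum>x\<in>{x \<in> P. x \<in> Q}. if inv_into I g x < inv_into D g x then 1 else 0)"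
    unfolding G_def by (rule sum.inter_filter[symmetric]) simp
  also have "{x \<in> P. x \<in> Q} = P \<inter> Q" by auto
  finally show ?thesis .
qed

lemma bij_betw_exchange:
  assumes "bij_betw g A B" "a \<in> A" "b \<notin> A" "g b = g a"
  shows "bij_betw g (insert b (A - {a})) B"
proof -
  have "bij_betw g (A - {a}) (B - {g a})"
    using assms by (intro bij_betw_DiffI) (auto simp: bij_betwE bij_betw_singletonI)
  then have "bij_betw g ((A - {a}) \<union> {b}) ((B - {g a}) \<union> {g a})"
    using assms(3,4) notIn_Un_bij_betw3[of b "A - {a}" g "B - {g a}"] by simp
  moreover have "(B - {g a}) \<union> {g a} = B" using assms(1,2) bij_betwE by blast
  ultimately show ?thesis by simp
qed

lemma split_bijections_exchange:
  assumes z: "(I, g) \<in> split_bijections H P Q" and a: "a \<in> I" and b: "b \<in> H - I" and ab: "g a = g b"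
  shows "(insert b (I - {a}), g) \<in> split_bijections H P Q"
proof -
  have IH: "I \<subseteq> H" and gE: "g \<in> H \<rightarrow>\<^sub>E P \<union> Q" and gI: "bij_betw g I P" and gD: "bij_betw g (H - I) Q"
    using z by (auto simp: split_bijections_def)
  have "H - insert b (I - {a}) = insert a ((H - I) - {b})" using IH a b by auto
  moreover have "bij_betw g (insert a ((H - I) - {b})) Q"
    using bij_betw_exchange[OF gD b, of a] a ab by simp
  moreover have "bij_betw g (insert b (I - {a})) P"
    using bij_betw_exchange[OF gI a, of b] b ab by simp
  ultimately show ?thesis using IH gE a b by (auto simp: split_bijections_def)
qed

text \<open>Only the collision at \<open>g a\<close> is affected, and it is counted in exactly one of the two
  configurations.\<close>
lemma colliding_pairs_exchange:
  fixes H :: "'a::{finite,linorder} set"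
  assumes z: "(I, g) \<in> split_bijections H P Q" and a: "a \<in> I" and b: "b \<in> H - I" and ab: "g a = g b"
  defines "I' \<equiv> insert b (I - {a})"
  shows "odd (colliding_pairs I' g (H - I') + colliding_pairs I g (H - I))"
proof -
  have gI: "bij_betw g I P" and gD: "bij_betw g (H - I) Q" using z by (auto simp: split_bijections_def)
  have "(I', g) \<in> split_bijections H P Q" unfolding I'_def by (rule split_bijections_exchange[OF z a b ab])
  then have gI': "bij_betw g I' P" and gD': "bij_betw g (H - I') Q" by (auto simp: split_bijections_def)
  have D': "H - I' = insert a ((H - I) - {b})" using z a b by (auto simp: I'_def split_bijections_def)
  define x0 where "x0 = g a"
  have x0: "x0 \<in> P \<inter> Q" using bij_betwE[OF gI] bij_betwE[OF gD] a b ab by (auto simp: x0_def)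
  have inv_eq: "inv_into A g x = c" if "bij_betw g A B" "c \<in> A" "g c = x" for A B c x
    using that by (auto intro: inv_into_f_eq bij_betw_imp_inj_on)
  define t where "t = (\<lambda>A B x. if inv_into A g x < inv_into B g x then 1 else (0::nat))"
  have same: "t I' (H - I') x = t I (H - I) x" if x: "x \<in> P \<inter> Q - {x0}" for x
  proof -
    define c where "c = inv_into I g x"
    define d where "d = inv_into (H - I) g x"
    have "c \<in> I" "g c = x" "d \<in> H - I" "g d = x"
      using x bij_betw_inv_into_right[OF gI] bij_betw_inv_into_right[OF gD]
        bij_betwE[OF bij_betw_inv_into[OF gI]] bij_betwE[OF bij_betw_inv_into[OF gD]]
      by (auto simp: c_def d_def)
    moreover have "c \<noteq> a" "d \<noteq> b" using x \<open>g c = x\<close> \<open>g d = x\<close> ab by (auto simp: x0_def)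
    ultimately have "c \<in> I'" "d \<in> H - I'" "g c = x" "g d = x" by (auto simp: I'_def D')
    then have "inv_into I' g x = c" "inv_into (H - I') g x = d"
      using inv_eq[OF gI'] inv_eq[OF gD'] by blast+
    then show ?thesis by (simp add: t_def c_def d_def)
  qed
  have "a \<noteq> b" using a b by auto
  have "b \<in> I'" "a \<in> H - I'" "g a = x0" "g b = x0"
    using a b ab z by (auto simp: I'_def D' x0_def split_bijections_def)
  then have "inv_into I g x0 = a" "inv_into (H - I) g x0 = b" "inv_into I' g x0 = b" "inv_into (H - I') g x0 = a"
    using inv_eq[OF gI] inv_eq[OF gD] inv_eq[OF gI'] inv_eq[OF gD'] a b by blast+
  then have flip: "t I' (H - I') x0 + t I (H - I) x0 = 1" using \<open>a \<noteq> b\<close> by (auto simp: t_def)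
  have "colliding_pairs I' g (H - I') = (\<Sum>x\<in>P \<inter> Q. t I' (H - I') x)"
    by (simp add: colliding_pairs_eq_sum[OF gI' gD'] t_def)
  also have "\<dots> = t I' (H - I') x0 + (\<Sum>x\<in>P \<inter> Q - {x0}. t I (H - I) x)"
  proof -
    have "(\<Sum>x\<in>P \<inter> Q - {x0}. t I' (H - I') x) = (\<Sum>x\<in>P \<inter> Q - {x0}. t I (H - I) x)"
      by (rule sum.cong[OF refl]) (rule same)
    then show ?thesis using sum.remove[OF _ x0, of "t I' (H - I')"] by simp
  qed
  finally have C': "colliding_pairs I' g (H - I') = t I' (H - I') x0 + (\<Sum>x\<in>P \<inter> Q - {x0}. t I (H - I) x)" .
  have "colliding_pairs I g (H - I) = (\<Sum>x\<in>P \<inter> Q. t I (H - I) x)"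
    by (simp add: colliding_pairs_eq_sum[OF gI gD] t_def)
  also have "\<dots> = t I (H - I) x0 + (\<Sum>x\<in>P \<inter> Q - {x0}. t I (H - I) x)"
    by (simp add: sum.remove[OF _ x0])
  finally have "colliding_pairs I' g (H - I') + colliding_pairs I g (H - I)
      = 1 + 2 * (\<Sum>x\<in>P \<inter> Q - {x0}. t I (H - I) x)"
    using C' flip by linarith
  then show ?thesis by simp
qed

definition swap_preimages :: "'a \<Rightarrow> 'a set \<Rightarrow> 'a set \<times> ('a \<Rightarrow> 'a) \<Rightarrow> 'a set \<times> ('a \<Rightarrow> 'a)" where
  "swap_preimages x H = (\<lambda>(I, g). (insert (inv_into (H - I) g x) (I - {inv_into I g x}), g))"

lemma swap_preimages_split_bijections:
  fixes H :: "'a::{finite,linorder} set"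
  assumes x: "x \<in> P \<inter> Q" and z: "(I, g) \<in> split_bijections H P Q"
  defines "I' \<equiv> insert (inv_into (H - I) g x) (I - {inv_into I g x})"
  shows "swap_preimages x H (I, g) = (I', g)"
    and "(I', g) \<in> split_bijections H P Q"
    and "swap_preimages x H (I', g) = (I, g)"
    and "odd (colliding_pairs I' g (H - I') + colliding_pairs I g (H - I))"
proof -
  have IH: "I \<subseteq> H" and gI: "bij_betw g I P" and gD: "bij_betw g (H - I) Q"
    using z by (auto simp: split_bijections_def)
  define a where "a = inv_into I g x"
  define b where "b = inv_into (H - I) g x"
  have a: "a \<in> I" "g a = x" and b: "b \<in> H - I" "g b = x"
    using x bij_betwE[OF bij_betw_inv_into[OF gI]] bij_betwE[OF bij_betw_inv_into[OF gD]]
      bij_betw_inv_into_right[OF gI] bij_betw_inv_into_right[OF gD]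
    by (auto simp: a_def b_def)
  have I': "I' = insert b (I - {a})" by (simp add: I'_def a_def b_def)
  show "swap_preimages x H (I, g) = (I', g)" by (simp add: swap_preimages_def I'_def)
  show z': "(I', g) \<in> split_bijections H P Q"
    unfolding I' by (rule split_bijections_exchange[OF z a(1) b(1)]) (simp add: a b)
  show "odd (colliding_pairs I' g (H - I') + colliding_pairs I g (H - I))"
    unfolding I' by (rule colliding_pairs_exchange[OF z a(1) b(1)]) (simp add: a b)
  have gI': "bij_betw g I' P" and gD': "bij_betw g (H - I') Q"
    using z' by (auto simp: split_bijections_def)
  have "b \<in> I'" "a \<in> H - I'" using a b IH by (auto simp: I')
  then have "inv_into I' g x = b" "inv_into (H - I') g x = a"
    using a b by (auto intro: inv_into_f_eq bij_betw_imp_inj_on[OF gI'] bij_betw_imp_inj_on[OF gD'])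
  moreover have "insert a (I' - {b}) = I" using a b by (auto simp: I')
  ultimately show "swap_preimages x H (I', g) = (I, g)" by (simp add: swap_preimages_def)
qed

lemma laplace_sign_split_bijections:
  fixes H :: "'a::{finite,linorder} set"
  assumes "(I, g) \<in> split_bijections H P Q"
  shows "(-1::'b::comm_ring_1) ^ (s_pos H I + inversions I g + inversions (H - I) g)
      = (-1) ^ (s_pos P P + card P * card Q + less_pairs P Q) * (-1) ^ inversions H g
        * (-1) ^ colliding_pairs I g (H - I)"
  using laplace_sign_parity[of I H g P Q] assms by (simp add: split_bijections_def power_add)

lemma neg_one_power_odd_add:
  "odd (m + n) \<Longrightarrow> (-1::'a::ring_1) ^ m = - ((-1) ^ n)"
  by (cases "even n") (auto simp: neg_one_even_power neg_one_odd_power)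

lemma laplace_sum_overlap:
  fixes M :: "(('a::{idom, ring_char_0}, 'n::{finite,linorder}) vec, 'n) vec"
  assumes "P \<inter> Q \<noteq> {}"
  shows "(\<Sum>(I, g)\<in>split_bijections H P Q.
      (-1) ^ (s_pos H I + inversions I g + inversions (H - I) g) * (\<Prod>h\<in>H. M $ h $ g h)) = 0"
proof -
  obtain x where x: "x \<in> P \<inter> Q" using assms by blast
  define T where "T = (\<lambda>(I, g). (-1) ^ (s_pos H I + inversions I g + inversions (H - I) g)
      * (\<Prod>h\<in>H. M $ h $ g h) :: 'a)"
  have swap: "swap_preimages x H z \<in> split_bijections H P Q"
    "swap_preimages x H (swap_preimages x H z) = z"
    "T (swap_preimages x H z) = - T z" if "z \<in> split_bijections H P Q" for z
  proof -
    obtain I g where z: "z = (I, g)" by (rule prod.exhaust)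
    note sw = swap_preimages_split_bijections[OF x that[unfolded z]]
    show "swap_preimages x H z \<in> split_bijections H P Q" "swap_preimages x H (swap_preimages x H z) = z"
      using sw by (simp_all add: z)
    show "T (swap_preimages x H z) = - T z"
      unfolding z sw(1) T_def
      by (simp add: laplace_sign_split_bijections[OF sw(2)]
          laplace_sign_split_bijections[OF that[unfolded z]] neg_one_power_odd_add[OF sw(4)])
  qed
  have "sum T (split_bijections H P Q) = (\<Sum>z\<in>split_bijections H P Q. T (swap_preimages x H z))"
    by (rule sum.reindex_bij_witness[where i = "swap_preimages x H" and j = "swap_preimages x H"])
      (simp_all add: swap)
  also have "\<dots> = - sum T (split_bijections H P Q)" by (simp add: swap sum_negf)
  finally have "of_nat 2 * sum T (split_bijections H P Q) = 0" by (simp add: algebra_simps)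
  then show ?thesis by (simp add: T_def)
qed

lemma bij_betw_preimage_split:
  assumes g: "bij_betw g H (P \<union> Q)" and PQ: "P \<inter> Q = {}"
  shows "bij_betw g {h \<in> H. g h \<in> P} P" "bij_betw g (H - {h \<in> H. g h \<in> P}) Q"
proof -
  define I where "I = {h \<in> H. g h \<in> P}"
  have img: "g ` H = P \<union> Q" and inj: "inj_on g H" using g by (simp_all add: bij_betw_def)
  have "g ` I = P"
  proof (intro equalityI subsetI)
    fix y assume "y \<in> P"
    then obtain h where "h \<in> H" "y = g h" using img by blast
    with \<open>y \<in> P\<close> show "y \<in> g ` I" by (auto simp: I_def)
  qed (auto simp: I_def)
  moreover have "g ` (H - I) = Q"
  proof (intro equalityI subsetI)
    fix y assume "y \<in> g ` (H - I)"
    then obtain h where "h \<in> H" "h \<notin> I" "y = g h" by blast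
    then show "y \<in> Q" using img by (auto simp: I_def)
  next
    fix y assume "y \<in> Q"
    then obtain h where "h \<in> H" "y = g h" using img by blast
    moreover have "h \<notin> I" using PQ \<open>y \<in> Q\<close> calculation by (auto simp: I_def)
    ultimately show "y \<in> g ` (H - I)" by blast
  qed
  moreover have "inj_on g I" "inj_on g (H - I)" using inj by (auto simp: I_def intro: inj_on_subset)
  ultimately show "bij_betw g I P" "bij_betw g (H - I) Q"
    by (simp_all add: bij_betw_def)
qed

lemma bij_betw_snd_split_bijections:
  assumes PQ: "P \<inter> Q = {}"
  shows "bij_betw snd (split_bijections H P Q) (bijections H (P \<union> Q))"
proof (rule bij_betwI[where g = "\<lambda>g. ({h \<in> H. g h \<in> P}, g)"])
  show "snd \<in> split_bijections H P Q \<rightarrow> bijections H (P \<union> Q)"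
  proof
    fix z assume "z \<in> split_bijections H P Q"
    then obtain I g where z: "z = (I, g)" "I \<subseteq> H" "g \<in> H \<rightarrow>\<^sub>E P \<union> Q"
      and g: "bij_betw g I P" "bij_betw g (H - I) Q"
      by (cases z) (auto simp: split_bijections_def)
    have "bij_betw g (I \<union> (H - I)) (P \<union> Q)" by (rule bij_betw_combine[OF g PQ])
    moreover have "I \<union> (H - I) = H" using z(2) by auto
    ultimately show "snd z \<in> bijections H (P \<union> Q)" using z by (simp add: bijections_def)
  qed
  show "(\<lambda>g. ({h \<in> H. g h \<in> P}, g)) \<in> bijections H (P \<union> Q) \<rightarrow> split_bijections H P Q"
  proof
    fix g assume "g \<in> bijections H (P \<union> Q)"
    then have gE: "g \<in> H \<rightarrow>\<^sub>E P \<union> Q" and g: "bij_betw g H (P \<union> Q)" by (auto simp: bijections_def)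
    with bij_betw_preimage_split[OF g PQ] show "({h \<in> H. g h \<in> P}, g) \<in> split_bijections H P Q"
      by (auto simp: split_bijections_def)
  qed
  show "({h \<in> H. snd z h \<in> P}, snd z) = z" if "z \<in> split_bijections H P Q" for z
  proof -
    obtain I g where z: "z = (I, g)" by (rule prod.exhaust)
    with that have "I \<subseteq> H" "bij_betw g I P" "bij_betw g (H - I) Q"
      by (auto simp: split_bijections_def)
    then have "{h \<in> H. g h \<in> P} = I" using PQ by (auto dest: bij_betwE)
    then show ?thesis by (simp add: z)
  qed
qed simp

lemma laplace_sum_disjoint:
  fixes M :: "(('a::comm_ring_1, 'n::{finite,linorder}) vec, 'n) vec"
  assumes PQ: "P \<inter> Q = {}"
  shows "(\<Sum>(I, g)\<in>split_bijections H P Q.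
      (-1) ^ (s_pos H I + inversions I g + inversions (H - I) g) * (\<Prod>h\<in>H. M $ h $ g h))
    = (-1) ^ s_pos (P \<union> Q) P * minor M H (P \<union> Q)"
proof -
  define c where "c = s_pos P P + card P * card Q + less_pairs P Q"
  have sign: "(-1::'a) ^ c = (-1) ^ s_pos (P \<union> Q) P"
  proof -
    have "(P \<union> Q) - P = Q" using PQ by auto
    then have "c = s_pos (P \<union> Q) P + 2 * less_pairs P Q"
      using s_pos_add_less_pairs[of P "P \<union> Q"] by (simp add: c_def)
    then show ?thesis by (simp add: power_add power_mult)
  qed
  have "(\<Sum>(I, g)\<in>split_bijections H P Q.
      (-1) ^ (s_pos H I + inversions I g + inversions (H - I) g) * (\<Prod>h\<in>H. M $ h $ g h))
    = (\<Sum>z\<in>split_bijections H P Q. (-1) ^ c * ((-1) ^ inversions H (snd z) * (\<Prod>h\<in>H. M $ h $ snd z h)))"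
  proof (rule sum.cong[OF refl])
    fix z assume z: "z \<in> split_bijections H P Q"
    obtain I g where zz: "z = (I, g)" by (rule prod.exhaust)
    with z have "bij_betw g I P" "bij_betw g (H - I) Q" by (auto simp: split_bijections_def)
    then have "colliding_pairs I g (H - I) = 0" using PQ by (simp add: colliding_pairs_eq_sum)
    then have "(-1::'a) ^ (s_pos H I + inversions I g + inversions (H - I) g) = (-1) ^ c * (-1) ^ inversions H g"
      using laplace_sign_split_bijections[OF z[unfolded zz]] by (simp add: c_def)
    then show "(case z of (I, g) \<Rightarrow> (-1) ^ (s_pos H I + inversions I g + inversions (H - I) g)
        * (\<Prod>h\<in>H. M $ h $ g h)) = (-1) ^ c * ((-1) ^ inversions H (snd z) * (\<Prod>h\<in>H. M $ h $ snd z h))"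
      unfolding zz by (simp only: prod.case snd_conv mult.assoc)
  qed
  also have "\<dots> = (-1) ^ c * (\<Sum>z\<in>split_bijections H P Q.
      (-1) ^ inversions H (snd z) * (\<Prod>h\<in>H. M $ h $ snd z h))"
    by (simp add: sum_distrib_left)
  also have "\<dots> = (-1) ^ c * minor M H (P \<union> Q)"
    unfolding minor_def
    using sum.reindex_bij_betw[OF bij_betw_snd_split_bijections[OF PQ],
        of "\<lambda>f. (-1) ^ inversions H f * (\<Prod>i\<in>H. M $ i $ f i)"] by simp
  finally show ?thesis by (simp only: sign)
qed

theorem laplace_expansion_minor:
  fixes M :: "(('a::{idom, ring_char_0}, 'n::{finite,linorder}) vec, 'n) vec"
  shows "(\<Sum>I | I \<subseteq> H \<and> card I = card P. (-1) ^ s_pos H I * minor M I P * minor M (H - I) Q)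
     = (if P \<inter> Q = {} then (-1) ^ s_pos (P \<union> Q) P * minor M H (P \<union> Q) else 0)"
  unfolding laplace_sum_split_bijections
  using laplace_sum_disjoint[of P Q H M] laplace_sum_overlap[of P Q H M] by auto

definition laplace_coeff :: "((complex, 'n::{finite,linorder}) vec, 'n) vec \<Rightarrow> 'n set \<Rightarrow> 'n set \<Rightarrow> 'n set \<Rightarrow> complex" where
  "laplace_coeff M H P Q = (if P \<inter> Q = {} then (-1) ^ s_pos (P \<union> Q) P * det_sub M H (P \<union> Q) else 0)"

theorem laplace_expansion:
  fixes M :: "((complex, 'n::{finite,linorder}) vec, 'n) vec"
  assumes H: "card H = card P + card Q"
  shows "(\<Sum>I | I \<subseteq> H \<and> card I = card P. (-1) ^ s_pos H I * det_sub M I P * det_sub M (H - I) Q)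
     = laplace_coeff M H P Q"
proof -
  have "(\<Sum>I | I \<subseteq> H \<and> card I = card P. (-1) ^ s_pos H I * det_sub M I P * det_sub M (H - I) Q)
      = (\<Sum>I | I \<subseteq> H \<and> card I = card P. (-1) ^ s_pos H I * minor M I P * minor M (H - I) Q)"
  proof (rule sum.cong[OF refl])
    fix I assume "I \<in> {I. I \<subseteq> H \<and> card I = card P}"
    then have "card I = card P" "card (H - I) = card Q" using H by (auto simp: card_Diff_subset)
    then show "(-1) ^ s_pos H I * det_sub M I P * det_sub M (H - I) Q
        = (-1) ^ s_pos H I * minor M I P * minor M (H - I) Q"
      by (simp add: det_sub_eq_minor)
  qed
  also have "\<dots> = laplace_coeff M H P Q"
  proof (cases "P \<inter> Q = {}")
    case True
    then have "card H = card (P \<union> Q)" using H by (simp add: card_Un_disjoint)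
    then show ?thesis using True by (simp add: laplace_expansion_minor laplace_coeff_def det_sub_eq_minor)
  qed (simp add: laplace_expansion_minor laplace_coeff_def)
  finally show ?thesis .
qed

lemma s_pos_UNIV: "s_pos UNIV I = sum_elems I"
  by (simp add: s_pos_def sum_elems_def)

lemma Pp_eq_subsets: "Pp p = {I. I \<subseteq> UNIV \<and> card I = p}"
  by (simp add: Pp_def)

text \<open>For \<open>K \<noteq> R\<close> this is the Laplace expansion of a matrix with a repeated column.\<close>
lemma laplace_complement_rows:
  fixes M :: "((complex, 'n::{finite,linorder}) vec, 'n) vec"
  assumes "card K = card R"
  shows "(\<Sum>I\<in>Pp (card K). (-1) ^ sum_elems I * det_sub M I K * det_sub M (UNIV - I) (UNIV - R))
       = (if K = R then (-1) ^ sum_elems K * det M else 0)"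
proof -
  have "card (UNIV :: 'n set) = card K + card (UNIV - R)"
    using assms card_mono[of UNIV R] by (simp add: card_Diff_subset)
  from laplace_expansion[OF this, of M]
  have "(\<Sum>I\<in>Pp (card K). (-1) ^ sum_elems I * det_sub M I K * det_sub M (UNIV - I) (UNIV - R))
      = laplace_coeff M UNIV K (UNIV - R)"
    by (simp add: Pp_eq_subsets s_pos_UNIV)
  also have "\<dots> = (if K = R then (-1) ^ sum_elems K * det M else 0)"
  proof (cases "K = R")
    case True
    then have "K \<inter> (UNIV - R) = {}" "K \<union> (UNIV - R) = UNIV" by auto
    then show ?thesis using True by (simp add: laplace_coeff_def s_pos_UNIV det_sub_UNIV)
  next
    case False
    have "K \<inter> (UNIV - R) \<noteq> {}"
    proof
      assume "K \<inter> (UNIV - R) = {}"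
      then have "K \<subseteq> R" by auto
      with assms have "K = R" by (simp add: card_subset_eq)
      with False show False ..
    qed
    then show ?thesis using False by (simp add: laplace_coeff_def)
  qed
  finally show ?thesis .
qed

lemma laplace_complement_cols:
  fixes M :: "((complex, 'n::{finite,linorder}) vec, 'n) vec"
  assumes "card H = card I"
  shows "(\<Sum>R\<in>Pp (card H). (-1) ^ sum_elems R * det_sub M H R * det_sub M (UNIV - I) (UNIV - R))
       = (if H = I then (-1) ^ sum_elems H * det M else 0)"
proof -
  have "(\<Sum>R\<in>Pp (card H). (-1) ^ sum_elems R * det_sub M H R * det_sub M (UNIV - I) (UNIV - R))
      = (\<Sum>R\<in>Pp (card H). (-1) ^ sum_elems R * det_sub (transpose M) R H
          * det_sub (transpose M) (UNIV - R) (UNIV - I))"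
    using assms by (intro sum.cong refl) (simp add: Pp_def det_sub_transpose card_Diff_subset)
  also have "\<dots> = (if H = I then (-1) ^ sum_elems H * det M else 0)"
    using laplace_complement_rows[OF assms, of "transpose M"] by (simp add: det_transpose)
  finally show ?thesis .
qed

section \<open>Inverses of compound matrices\<close>

lemma wmult_wid_left: "H \<in> Pp p \<Longrightarrow> wmult p (wid p) Z H K = Z H K"
proof -
  assume H: "H \<in> Pp p"
  have "wmult p (wid p) Z H K = (\<Sum>L\<in>Pp p. if H = L then Z L K else 0)"
    unfolding wmult_def by (rule sum.cong[OF refl]) (use H in \<open>simp add: wid_def\<close>)
  also have "\<dots> = Z H K" using H by simp
  finally show ?thesis .
qed

lemma wmult_wid_right: "K \<in> Pp p \<Longrightarrow> wmult p Z (wid p) H K = Z H K"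
proof -
  assume K: "K \<in> Pp p"
  have "wmult p Z (wid p) H K = (\<Sum>L\<in>Pp p. if L = K then Z H L else 0)"
    unfolding wmult_def by (rule sum.cong[OF refl]) (use K in \<open>auto simp add: wid_def\<close>)
  also have "\<dots> = Z H K" using K by simp
  finally show ?thesis .
qed

lemma wmult_assoc: "wmult p (wmult p X Y) Z = wmult p X (wmult p Y Z)"
proof (intro ext)
  fix H K
  have "wmult p (wmult p X Y) Z H K = (\<Sum>L\<in>Pp p. \<Sum>L'\<in>Pp p. X H L' * Y L' L * Z L K)"
    by (simp add: wmult_def sum_distrib_right)
  also have "\<dots> = (\<Sum>L'\<in>Pp p. \<Sum>L\<in>Pp p. X H L' * Y L' L * Z L K)" by (rule sum.swap)
  also have "\<dots> = wmult p X (wmult p Y Z) H K" by (simp add: wmult_def sum_distrib_left mult.assoc)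
  finally show "wmult p (wmult p X Y) Z H K = wmult p X (wmult p Y Z) H K" .
qed

lemma wtrans_wmult: "wmult p (wtrans X) (wtrans Y) = wtrans (wmult p Y X)"
  by (intro ext) (simp add: wmult_def wtrans_def mult.commute)

definition is_winv :: "nat \<Rightarrow> ('n::finite) wmat \<Rightarrow> 'n wmat \<Rightarrow> bool" where
  "is_winv p X Y \<longleftrightarrow> (\<forall>H\<in>Pp p. \<forall>K\<in>Pp p. wmult p X Y H K = wid p H K \<and> wmult p Y X H K = wid p H K)
    \<and> (\<forall>H K. H \<notin> Pp p \<or> K \<notin> Pp p \<longrightarrow> Y H K = 0)"

lemma winv_eqI:
  assumes Y: "is_winv p X Y"
  shows "winv p X = Y"
  unfolding winv_def
proof (rule the_equality)
  show "(\<forall>H\<in>Pp p. \<forall>K\<in>Pp p. wmult p X Y H K = wid p H K \<and> wmult p Y X H K = wid p H K)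
      \<and> (\<forall>H K. H \<notin> Pp p \<or> K \<notin> Pp p \<longrightarrow> Y H K = 0)"
    using Y by (simp add: is_winv_def)
next
  fix Y' assume Y': "(\<forall>H\<in>Pp p. \<forall>K\<in>Pp p. wmult p X Y' H K = wid p H K \<and> wmult p Y' X H K = wid p H K)
      \<and> (\<forall>H K. H \<notin> Pp p \<or> K \<notin> Pp p \<longrightarrow> Y' H K = 0)"
  show "Y' = Y"
  proof (intro ext)
    fix H K
    show "Y' H K = Y H K"
    proof (cases "H \<in> Pp p \<and> K \<in> Pp p")
      case True
      then have H: "H \<in> Pp p" and K: "K \<in> Pp p" by auto
      have "Y' H K = wmult p (wid p) Y' H K" by (rule wmult_wid_left[OF H, symmetric])
      also have "\<dots> = wmult p (wmult p Y X) Y' H K"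
        using Y H by (simp add: wmult_def[of p _ Y'] is_winv_def)
      also have "\<dots> = wmult p Y (wmult p X Y') H K" by (simp add: wmult_assoc)
      also have "\<dots> = wmult p Y (wid p) H K"
        using Y' K by (simp add: wmult_def[of p Y])
      also have "\<dots> = Y H K" by (rule wmult_wid_right[OF K])
      finally show ?thesis .
    next
      case False
      then show ?thesis using Y Y' unfolding is_winv_def by auto
    qed
  qed
qed

lemma is_winv_wtrans: "is_winv p X Y \<Longrightarrow> is_winv p (wtrans X) (wtrans Y)"
  unfolding is_winv_def wtrans_wmult by (auto simp: wtrans_def wid_def)

text \<open>Jacobi's complementary minor formula for the inverse of \<open>\<And>\<^sup>p M\<close>.\<close>
definition ext_pow_inv :: "nat \<Rightarrow> ((complex, 'n::{finite,linorder}) vec, 'n) vec \<Rightarrow> 'n wmat" where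
  "ext_pow_inv p M = (\<lambda>R I. if R \<in> Pp p \<and> I \<in> Pp p then
      (-1) ^ (sum_elems R + sum_elems I) * det_sub M (UNIV - I) (UNIV - R) / det M else 0)"

lemma is_winv_ext_pow_inv:
  fixes M :: "((complex, 'n::{finite,linorder}) vec, 'n) vec"
  assumes d: "det M \<noteq> 0"
  shows "is_winv p (ext_pow p M) (ext_pow_inv p M)"
  unfolding is_winv_def
proof (intro conjI ballI allI impI)
  fix H K :: "'n set" assume H: "H \<in> Pp p" and K: "K \<in> Pp p"
  have cH: "card H = p" and cK: "card K = p" using H K by (auto simp: Pp_def)
  have "wmult p (ext_pow p M) (ext_pow_inv p M) H K
      = (-1) ^ sum_elems K / det M * (\<Sum>R\<in>Pp p. (-1) ^ sum_elems R * det_sub M H R * det_sub M (UNIV - K) (UNIV - R))"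
    unfolding wmult_def sum_distrib_left
    by (rule sum.cong[OF refl]) (use H K in \<open>simp add: ext_pow_def ext_pow_inv_def power_add\<close>)
  also have "\<dots> = wid p H K"
    using laplace_complement_cols[of H K M] cH cK H K d
    by (auto simp: wid_def power_add[symmetric] power_mult_distrib[symmetric])
  finally show "wmult p (ext_pow p M) (ext_pow_inv p M) H K = wid p H K" .
  have "wmult p (ext_pow_inv p M) (ext_pow p M) H K
      = (-1) ^ sum_elems H / det M * (\<Sum>I\<in>Pp p. (-1) ^ sum_elems I * det_sub M I K * det_sub M (UNIV - I) (UNIV - H))"
    unfolding wmult_def sum_distrib_left
    by (rule sum.cong[OF refl]) (use H K in \<open>simp add: ext_pow_def ext_pow_inv_def power_add\<close>)
  also have "\<dots> = wid p H K"
    using laplace_complement_rows[of K H M] cH cK H K d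
    by (auto simp: wid_def power_add[symmetric] power_mult_distrib[symmetric])
  finally show "wmult p (ext_pow_inv p M) (ext_pow p M) H K = wid p H K" .
next
  fix H K :: "'n set" assume "H \<notin> Pp p \<or> K \<notin> Pp p"
  then show "ext_pow_inv p M H K = 0" by (auto simp: ext_pow_inv_def)
qed

lemma winv_ext_pow:
  "det M \<noteq> 0 \<Longrightarrow> winv p (ext_pow p M) = ext_pow_inv p M"
  by (rule winv_eqI[OF is_winv_ext_pow_inv])

lemma winv_wtrans_ext_pow:
  "det M \<noteq> 0 \<Longrightarrow> winv p (wtrans (ext_pow p M)) = wtrans (ext_pow_inv p M)"
  by (rule winv_eqI[OF is_winv_wtrans[OF is_winv_ext_pow_inv]])

section \<open>Naturality of the product under congruence\<close>

definition wconj :: "nat \<Rightarrow> ((complex, 'n::{finite,linorder}) vec, 'n) vec \<Rightarrow> 'n wmat \<Rightarrow> 'n wmat" where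
  "wconj r M X = wmult r (wmult r (ext_pow r M) X) (wtrans (ext_pow r M))"

lemma wconj_eq:
  assumes "H \<in> Pp r" "K \<in> Pp r"
  shows "wconj r M X H K = (\<Sum>P'\<in>Pp r. det_sub M H P' * (\<Sum>P\<in>Pp r. det_sub M K P * X P' P))"
proof -
  have "wconj r M X H K = (\<Sum>P\<in>Pp r. (\<Sum>P'\<in>Pp r. det_sub M H P' * X P' P) * det_sub M K P)"
    unfolding wconj_def wmult_def wtrans_def
    by (rule sum.cong[OF refl]) (use assms in \<open>auto simp: ext_pow_def intro!: sum.cong\<close>)
  also have "\<dots> = (\<Sum>P\<in>Pp r. \<Sum>P'\<in>Pp r. det_sub M H P' * (det_sub M K P * X P' P))"
    by (simp add: sum_distrib_left sum_distrib_right mult_ac)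
  also have "\<dots> = (\<Sum>P'\<in>Pp r. \<Sum>P\<in>Pp r. det_sub M H P' * (det_sub M K P * X P' P))"
    by (rule sum.swap)
  finally show ?thesis by (simp add: sum_distrib_left)
qed

lemma wconj_outside: "\<not> (H \<in> Pp r \<and> K \<in> Pp r) \<Longrightarrow> wconj r M X H K = 0"
  unfolding wconj_def wmult_def wtrans_def ext_pow_def by auto

lemma laplace_expansion_bilinear:
  fixes M :: "((complex, 'n::{finite,linorder}) vec, 'n) vec"
  assumes H: "card H = p + q"
  shows "(\<Sum>I | I \<subseteq> H \<and> card I = p. (-1) ^ s_pos H I
        * (\<Sum>P\<in>Pp p. det_sub M I P * \<alpha> P) * (\<Sum>Q\<in>Pp q. det_sub M (H - I) Q * \<beta> Q))
     = (\<Sum>P\<in>Pp p. \<Sum>Q\<in>Pp q. \<alpha> P * \<beta> Q * laplace_coeff M H P Q)"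
proof -
  have "(\<Sum>I | I \<subseteq> H \<and> card I = p. (-1) ^ s_pos H I
        * (\<Sum>P\<in>Pp p. det_sub M I P * \<alpha> P) * (\<Sum>Q\<in>Pp q. det_sub M (H - I) Q * \<beta> Q))
      = (\<Sum>I | I \<subseteq> H \<and> card I = p. \<Sum>P\<in>Pp p. \<Sum>Q\<in>Pp q.
          \<alpha> P * \<beta> Q * ((-1) ^ s_pos H I * det_sub M I P * det_sub M (H - I) Q))"
    by (simp add: sum_distrib_left sum_distrib_right mult_ac)
  also have "\<dots> = (\<Sum>P\<in>Pp p. \<Sum>Q\<in>Pp q. \<Sum>I | I \<subseteq> H \<and> card I = p.
          \<alpha> P * \<beta> Q * ((-1) ^ s_pos H I * det_sub M I P * det_sub M (H - I) Q))"
    by (subst sum.swap) (rule sum.cong[OF refl], rule sum.swap)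
  also have "\<dots> = (\<Sum>P\<in>Pp p. \<Sum>Q\<in>Pp q. \<alpha> P * \<beta> Q * laplace_coeff M H P Q)"
  proof (intro sum.cong refl)
    fix P Q :: "'n set" assume "P \<in> Pp p" "Q \<in> Pp q"
    then have "card H = card P + card Q" "p = card P" using H by (auto simp: Pp_def)
    then show "(\<Sum>I | I \<subseteq> H \<and> card I = p. \<alpha> P * \<beta> Q * ((-1) ^ s_pos H I * det_sub M I P * det_sub M (H - I) Q))
        = \<alpha> P * \<beta> Q * laplace_coeff M H P Q"
      by (simp add: sum_distrib_left[symmetric] laplace_expansion)
  qed
  finally show ?thesis .
qed

lemma sum_Pp_subsets:
  fixes G :: "'n::finite set \<Rightarrow> 'n set \<Rightarrow> complex"
  shows "(\<Sum>U\<in>Pp (p + q). \<Sum>P | P \<subseteq> U \<and> card P = p. G U P)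
       = (\<Sum>P\<in>Pp p. \<Sum>Q\<in>Pp q. if P \<inter> Q = {} then G (P \<union> Q) P else 0)"
proof -
  have "(\<Sum>U\<in>Pp (p + q). \<Sum>P | P \<subseteq> U \<and> card P = p. G U P)
      = (\<Sum>x\<in>(SIGMA U:Pp (p + q). {P. P \<subseteq> U \<and> card P = p}). G (fst x) (snd x))"
    by (subst sum.Sigma) (simp_all add: case_prod_beta)
  also have "\<dots> = (\<Sum>y\<in>{y \<in> Pp p \<times> Pp q. fst y \<inter> snd y = {}}. G (fst y \<union> snd y) (fst y))"
  proof (rule sum.reindex_bij_witness[where j = "\<lambda>(U, P). (P, U - P)" and i = "\<lambda>(P, Q). (P \<union> Q, P)"])
    fix x :: "'n set \<times> 'n set" assume x: "x \<in> (SIGMA U:Pp (p + q). {P. P \<subseteq> U \<and> card P = p})"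
    obtain U P where xx: "x = (U, P)" by (rule prod.exhaust)
    with x have U: "card U = p + q" and PU: "P \<subseteq> U" and cP: "card P = p" by (auto simp: Pp_def)
    show "(\<lambda>(P, Q). (P \<union> Q, P)) ((\<lambda>(U, P). (P, U - P)) x) = x" using xx PU by auto
    have "card (U - P) = q" using U PU cP by (simp add: card_Diff_subset)
    then show "(\<lambda>(U, P). (P, U - P)) x \<in> {y \<in> Pp p \<times> Pp q. fst y \<inter> snd y = {}}"
      using xx cP by (auto simp: Pp_def)
    show "G (fst ((\<lambda>(U, P). (P, U - P)) x) \<union> snd ((\<lambda>(U, P). (P, U - P)) x)) (fst ((\<lambda>(U, P). (P, U - P)) x))
        = G (fst x) (snd x)"
      using xx PU by (simp add: Un_absorb1 Un_Diff_cancel)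
  next
    fix y :: "'n set \<times> 'n set" assume y: "y \<in> {y \<in> Pp p \<times> Pp q. fst y \<inter> snd y = {}}"
    obtain P Q where yy: "y = (P, Q)" by (rule prod.exhaust)
    with y have cP: "card P = p" and cQ: "card Q = q" and d: "P \<inter> Q = {}" by (auto simp: Pp_def)
    show "(\<lambda>(U, P). (P, U - P)) ((\<lambda>(P, Q). (P \<union> Q, P)) y) = y" using yy d by auto
    have "card (P \<union> Q) = p + q" using card_Un_disjoint[OF _ _ d] cP cQ by simp
    then show "(\<lambda>(P, Q). (P \<union> Q, P)) y \<in> (SIGMA U:Pp (p + q). {P. P \<subseteq> U \<and> card P = p})"
      using yy cP by (auto simp: Pp_def)
  qed
  also have "\<dots> = (\<Sum>y\<in>Pp p \<times> Pp q. if fst y \<inter> snd y = {} then G (fst y \<union> snd y) (fst y) else 0)"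
    by (rule sum.inter_filter) simp
  also have "\<dots> = (\<Sum>P\<in>Pp p. \<Sum>Q\<in>Pp q. if P \<inter> Q = {} then G (P \<union> Q) P else 0)"
    by (simp add: sum.cartesian_product case_prod_beta)
  finally show ?thesis .
qed

lemma sum_Pp_laplace_coeff:
  fixes M :: "((complex, 'n::{finite,linorder}) vec, 'n) vec"
  shows "(\<Sum>U\<in>Pp (p + q). \<Sum>P | P \<subseteq> U \<and> card P = p. (-1) ^ s_pos U P * det_sub M H U * G P (U - P))
       = (\<Sum>P\<in>Pp p. \<Sum>Q\<in>Pp q. laplace_coeff M H P Q * G P Q)"
  unfolding sum_Pp_subsets
proof (intro sum.cong refl)
  fix P Q :: "'n set"
  show "(if P \<inter> Q = {} then (-1) ^ s_pos (P \<union> Q) P * det_sub M H (P \<union> Q) * G P (P \<union> Q - P) else 0)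
      = laplace_coeff M H P Q * G P Q"
  proof (cases "P \<inter> Q = {}")
    case True
    then have "P \<union> Q - P = Q" by auto
    then show ?thesis using True by (simp add: laplace_coeff_def)
  qed (simp add: laplace_coeff_def)
qed

lemma subset_Pp_complement:
  "I \<subseteq> H \<Longrightarrow> card I = p \<Longrightarrow> H \<in> Pp (p + q) \<Longrightarrow> I \<in> Pp p \<and> H - I \<in> Pp q"
  by (auto simp: Pp_def card_Diff_subset)

lemma sqcap_wconj_expand:
  fixes M :: "((complex, 'n::{finite,linorder}) vec, 'n) vec"
  assumes H: "H \<in> Pp (p + q)" and K: "K \<in> Pp (p + q)"
  shows "sqcap p q (wconj p M X) (wconj q M Y) H K = 1 / of_nat ((p + q) choose p) *
    (\<Sum>P'\<in>Pp p. \<Sum>Q'\<in>Pp q. laplace_coeff M H P' Q' *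
      (\<Sum>P\<in>Pp p. \<Sum>Q\<in>Pp q. laplace_coeff M K P Q * (X P' P * Y Q' Q)))"
proof -
  define DX where "DX = (\<lambda>J P'. \<Sum>P\<in>Pp p. det_sub M J P * X P' P)"
  define EY where "EY = (\<lambda>J Q'. \<Sum>Q\<in>Pp q. det_sub M (K - J) Q * Y Q' Q)"
  have cH: "card H = p + q" and cK: "card K = p + q" using H K by (auto simp: Pp_def)
  have HI: "I \<in> Pp p" "H - I \<in> Pp q" if "I \<subseteq> H \<and> card I = p" for I
    using subset_Pp_complement[OF _ _ H] that by auto
  have KJ: "J \<in> Pp p" "K - J \<in> Pp q" if "J \<subseteq> K \<and> card J = p" for J
    using subset_Pp_complement[OF _ _ K] that by auto
  have "(\<Sum>I | I \<subseteq> H \<and> card I = p. \<Sum>J | J \<subseteq> K \<and> card J = p.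
        (-1) ^ (s_pos H I + s_pos K J) * wconj p M X I J * wconj q M Y (H - I) (K - J))
      = (\<Sum>J | J \<subseteq> K \<and> card J = p. (-1) ^ s_pos K J * (\<Sum>I | I \<subseteq> H \<and> card I = p. (-1) ^ s_pos H I
          * (\<Sum>P'\<in>Pp p. det_sub M I P' * DX J P') * (\<Sum>Q'\<in>Pp q. det_sub M (H - I) Q' * EY J Q')))"
  proof (subst sum.swap, intro sum.cong refl)
    fix J assume J: "J \<in> {J. J \<subseteq> K \<and> card J = p}"
    show "(\<Sum>I | I \<subseteq> H \<and> card I = p.
          (-1) ^ (s_pos H I + s_pos K J) * wconj p M X I J * wconj q M Y (H - I) (K - J))
        = (-1) ^ s_pos K J * (\<Sum>I | I \<subseteq> H \<and> card I = p. (-1) ^ s_pos H I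
          * (\<Sum>P'\<in>Pp p. det_sub M I P' * DX J P') * (\<Sum>Q'\<in>Pp q. det_sub M (H - I) Q' * EY J Q'))"
      unfolding sum_distrib_left[of "(-1) ^ s_pos K J"]
      by (intro sum.cong refl) (use J in \<open>simp add: wconj_eq HI KJ DX_def EY_def power_add mult_ac\<close>)
  qed
  also have "\<dots> = (\<Sum>J | J \<subseteq> K \<and> card J = p. (-1) ^ s_pos K J *
      (\<Sum>P'\<in>Pp p. \<Sum>Q'\<in>Pp q. DX J P' * EY J Q' * laplace_coeff M H P' Q'))"
    by (simp add: laplace_expansion_bilinear[OF cH])
  also have "\<dots> = (\<Sum>P'\<in>Pp p. \<Sum>Q'\<in>Pp q. laplace_coeff M H P' Q' *
      (\<Sum>J | J \<subseteq> K \<and> card J = p. (-1) ^ s_pos K J * DX J P' * EY J Q'))"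
    by (simp add: sum_distrib_left sum.swap[of _ "{J. J \<subseteq> K \<and> card J = p}"] mult_ac)
  also have "\<dots> = (\<Sum>P'\<in>Pp p. \<Sum>Q'\<in>Pp q. laplace_coeff M H P' Q' *
      (\<Sum>P\<in>Pp p. \<Sum>Q\<in>Pp q. laplace_coeff M K P Q * (X P' P * Y Q' Q)))"
    using laplace_expansion_bilinear[OF cK, of M "\<lambda>P. X _ P" "\<lambda>Q. Y _ Q"]
    by (simp add: DX_def EY_def mult_ac)
  finally show ?thesis using H K by (simp add: sqcap_def)
qed

lemma wconj_sqcap_expand:
  fixes M :: "((complex, 'n::{finite,linorder}) vec, 'n) vec"
  assumes H: "H \<in> Pp (p + q)" and K: "K \<in> Pp (p + q)"
  shows "wconj (p + q) M (sqcap p q X Y) H K = 1 / of_nat ((p + q) choose p) *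
    (\<Sum>P'\<in>Pp p. \<Sum>Q'\<in>Pp q. laplace_coeff M H P' Q' *
      (\<Sum>P\<in>Pp p. \<Sum>Q\<in>Pp q. laplace_coeff M K P Q * (X P' P * Y Q' Q)))"
proof -
  define c :: complex where "c = 1 / of_nat ((p + q) choose p)"
  define inner where "inner = (\<lambda>P' Q'. \<Sum>V\<in>Pp (p + q). \<Sum>P | P \<subseteq> V \<and> card P = p.
      (-1) ^ s_pos V P * det_sub M K V * (X P' P * Y Q' (V - P)))"
  have "wconj (p + q) M (sqcap p q X Y) H K
      = (\<Sum>U\<in>Pp (p + q). det_sub M H U * (\<Sum>V\<in>Pp (p + q). det_sub M K V * sqcap p q X Y U V))"
    by (rule wconj_eq[OF H K])
  also have "\<dots> = c * (\<Sum>U\<in>Pp (p + q). \<Sum>P' | P' \<subseteq> U \<and> card P' = p.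
      (-1) ^ s_pos U P' * det_sub M H U * inner P' (U - P'))"
    unfolding sum_distrib_left[of c]
  proof (intro sum.cong refl)
    fix U :: "'n set" assume U: "U \<in> Pp (p + q)"
    have "(\<Sum>V\<in>Pp (p + q). det_sub M K V * sqcap p q X Y U V)
        = c * (\<Sum>P' | P' \<subseteq> U \<and> card P' = p. (-1) ^ s_pos U P' * inner P' (U - P'))"
    proof -
      have "(\<Sum>V\<in>Pp (p + q). det_sub M K V * sqcap p q X Y U V)
          = (\<Sum>V\<in>Pp (p + q). \<Sum>P' | P' \<subseteq> U \<and> card P' = p. \<Sum>P | P \<subseteq> V \<and> card P = p.
              c * ((-1) ^ s_pos U P' * ((-1) ^ s_pos V P * det_sub M K V * (X P' P * Y (U - P') (V - P)))))"
        by (intro sum.cong refl) (use U in \<open>simp add: sqcap_def c_def sum_distrib_left power_add mult_ac\<close>)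
      also have "\<dots> = (\<Sum>P' | P' \<subseteq> U \<and> card P' = p. \<Sum>V\<in>Pp (p + q). \<Sum>P | P \<subseteq> V \<and> card P = p.
              c * ((-1) ^ s_pos U P' * ((-1) ^ s_pos V P * det_sub M K V * (X P' P * Y (U - P') (V - P)))))"
        by (rule sum.swap)
      finally show ?thesis by (simp add: inner_def sum_distrib_left)
    qed
    then show "det_sub M H U * (\<Sum>V\<in>Pp (p + q). det_sub M K V * sqcap p q X Y U V)
        = (\<Sum>P' | P' \<subseteq> U \<and> card P' = p. c * ((-1) ^ s_pos U P' * det_sub M H U * inner P' (U - P')))"
      by (simp add: sum_distrib_left mult_ac)
  qed
  also have "\<dots> = c * (\<Sum>P'\<in>Pp p. \<Sum>Q'\<in>Pp q. laplace_coeff M H P' Q' * inner P' Q')"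
    by (simp only: sum_Pp_laplace_coeff)
  also have "inner = (\<lambda>P' Q'. \<Sum>P\<in>Pp p. \<Sum>Q\<in>Pp q. laplace_coeff M K P Q * (X P' P * Y Q' Q))"
    unfolding inner_def by (intro ext) (rule sum_Pp_laplace_coeff)
  finally show ?thesis by (simp add: c_def)
qed

lemma sqcap_wconj:
  fixes M :: "((complex, 'n::{finite,linorder}) vec, 'n) vec"
  shows "sqcap p q (wconj p M X) (wconj q M Y) = wconj (p + q) M (sqcap p q X Y)"
proof (intro ext)
  fix H K :: "'n set"
  show "sqcap p q (wconj p M X) (wconj q M Y) H K = wconj (p + q) M (sqcap p q X Y) H K"
  proof (cases "H \<in> Pp (p + q) \<and> K \<in> Pp (p + q)")
    case True
    then show ?thesis by (simp add: sqcap_wconj_expand wconj_sqcap_expand)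
  next
    case False
    then show ?thesis by (auto simp: sqcap_def wconj_outside)
  qed
qed

lemma bij_betw_singleton_Pp_1: "bij_betw (\<lambda>l. {l}) (UNIV :: 'n::finite set) (Pp 1)"
proof (rule bij_betwI')
  show "\<And>y. y \<in> Pp 1 \<Longrightarrow> \<exists>x\<in>UNIV. y = {x}" by (auto simp: Pp_def card_1_singleton_iff)
qed (simp_all add: Pp_def)

lemma lift1_congruence:
  fixes M B :: "((complex, 'n::{finite,linorder}) vec, 'n) vec"
  shows "lift1 (cscale c (M ** B ** transpose M)) = (\<lambda>H K. c * wconj 1 M (lift1 B) H K)"
proof (intro ext)
  fix H K :: "'n set"
  show "lift1 (cscale c (M ** B ** transpose M)) H K = c * wconj 1 M (lift1 B) H K"
  proof (cases "H \<in> Pp 1 \<and> K \<in> Pp 1")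
    case False
    then show ?thesis using wconj_outside[OF False] by (auto simp: lift1_def ext_pow_def)
  next
    case True
    then obtain h k where hk: "H = {h}" "K = {k}" by (auto simp: Pp_def card_1_singleton_iff)
    have sum_Pp_1: "(\<Sum>P\<in>Pp 1. f P) = (\<Sum>l\<in>UNIV. f {l})" for f :: "'n set \<Rightarrow> complex"
      by (rule sum.reindex_bij_betw[OF bij_betw_singleton_Pp_1, symmetric])
    have singleton: "{l} \<in> Pp (Suc 0)" for l :: 'n by (simp add: Pp_def)
    have "wconj 1 M (lift1 B) H K = (\<Sum>l\<in>UNIV. M $ h $ l * (\<Sum>l'\<in>UNIV. M $ k $ l' * B $ l $ l'))"
      using True unfolding wconj_eq[OF True[THEN conjunct1] True[THEN conjunct2]] sum_Pp_1
      by (simp add: hk det_sub_singleton lift1_def ext_pow_def singleton)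
    also have "\<dots> = (M ** B ** transpose M) $ h $ k"
      by (simp add: matrix_matrix_mult_def transpose_def sum_distrib_left sum_distrib_right mult_ac)
        (rule sum.swap)
    finally show ?thesis
      using True by (simp add: hk lift1_def ext_pow_def det_sub_singleton cscale_def)
  qed
qed

lemma sqcap_scale:
  "sqcap p q (\<lambda>H K. a * X H K) (\<lambda>H K. b * Y H K) = (\<lambda>H K. a * b * sqcap p q X Y H K)"
  by (intro ext) (simp add: sqcap_def sum_distrib_left mult_ac)

lemma sqcap_prod_congruence:
  fixes M :: "((complex, 'n::{finite,linorder}) vec, 'n) vec"
  assumes A': "\<And>i. 1 \<le> i \<Longrightarrow> i \<le> k \<Longrightarrow> A' i = cscale c (M ** A i ** transpose M)"
  shows "1 \<le> m \<Longrightarrow> m \<le> k \<Longrightarrow> sqcap_prod A' m = (\<lambda>H K. c ^ m * wconj m M (sqcap_prod A m) H K)"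
proof (induction m rule: nat_induct_at_least)
  case base
  then show ?case using A'[of 1] by (simp add: lift1_congruence)
next
  case (Suc m)
  then obtain n where m: "m = Suc n" by (cases m) auto
  have "sqcap_prod A' (Suc m) = sqcap m 1 (sqcap_prod A' m) (lift1 (A' (Suc m)))"
    by (simp add: m)
  also have "\<dots> = sqcap m 1 (\<lambda>H K. c ^ m * wconj m M (sqcap_prod A m) H K)
      (\<lambda>H K. c * wconj 1 M (lift1 (A (Suc m))) H K)"
    using Suc A'[of "Suc m"] by (simp add: lift1_congruence)
  also have "\<dots> = (\<lambda>H K. c ^ Suc m * wconj (Suc m) M (sqcap_prod A (Suc m)) H K)"
    by (simp add: sqcap_scale sqcap_wconj m mult.commute)
  finally show ?case .
qed

section \<open>The automorphy factor is invertible\<close>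

definition cinner :: "complex ^ 'n::finite \<Rightarrow> complex ^ 'n \<Rightarrow> complex" where
  "cinner u v = (\<Sum>i\<in>UNIV. cnj (u $ i) * v $ i)"

lemma cinner_add_left: "cinner (u + w) v = cinner u v + cinner w v"
  by (simp add: cinner_def sum.distrib distrib_right)

lemma cinner_add_right: "cinner u (v + w) = cinner u v + cinner u w"
  by (simp add: cinner_def sum.distrib distrib_left)

lemma cinner_diff_right: "cinner u (v - w) = cinner u v - cinner u w"
  by (simp add: cinner_def sum_subtractf right_diff_distrib)

lemma cinner_zero_left [simp]: "cinner 0 u = 0"
  by (simp add: cinner_def)

lemma cinner_zero_right [simp]: "cinner u 0 = 0"
  by (simp add: cinner_def)

lemma cinner_commute: "cinner u v = cnj (cinner v u)"
  by (simp add: cinner_def mult.commute)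

lemma cinner_cmat_left: "cinner (cmat P *v a) v = cinner a (transpose (cmat P) *v v)"
proof -
  have "cinner (cmat P *v a) v = (\<Sum>i\<in>UNIV. \<Sum>j\<in>UNIV. cnj (a $ j) * cmat P $ i $ j * v $ i)"
    unfolding cinner_def matrix_vector_mult_def
    by (simp add: cmat_def sum_distrib_left sum_distrib_right mult_ac)
  also have "\<dots> = (\<Sum>j\<in>UNIV. \<Sum>i\<in>UNIV. cnj (a $ j) * cmat P $ i $ j * v $ i)" by (rule sum.swap)
  also have "\<dots> = cinner a (transpose (cmat P) *v v)"
    unfolding cinner_def matrix_vector_mult_def transpose_def by (simp add: sum_distrib_left mult_ac)
  finally show ?thesis .
qed

lemma cmat_mult: "cmat (X ** Y) = cmat X ** cmat Y"
  by (simp add: cmat_def matrix_matrix_mult_def vec_eq_iff)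

lemma cmat_transpose: "cmat (transpose X) = transpose (cmat X)"
  by (simp add: cmat_def transpose_def vec_eq_iff)

lemma cmat_diff: "cmat (X - Y) = cmat X - cmat Y"
  by (simp add: cmat_def vec_eq_iff)

lemma cmat_zero: "cmat 0 = 0"
  by (simp add: cmat_def vec_eq_iff)

lemma cmat_one: "cmat (mat 1) = mat 1"
  by (simp add: cmat_def vec_eq_iff mat_def)

lemma cmat_uminus: "cmat (- X) = - cmat X"
  by (simp add: cmat_def vec_eq_iff)

text \<open>The blockwise form of \<open>\<^sup>t\<gamma> J \<gamma> = J\<close>.\<close>
lemma symplectic_form_invariant:
  assumes "(A, B, C, D) \<in> Sp"
  shows "cinner (cmat A *v x + cmat B *v y) (cmat C *v x + cmat D *v y)
       - cinner (cmat C *v x + cmat D *v y) (cmat A *v x + cmat B *v y) = cinner x y - cinner y x"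
proof -
  let ?T = "\<lambda>X Y. transpose (cmat X) ** cmat Y"
  have "transpose A ** C - transpose C ** A = 0" "transpose A ** D - transpose C ** B = mat 1"
    "transpose B ** C - transpose D ** A = - mat 1" "transpose B ** D - transpose D ** B = 0"
    using assms unfolding Sp_def by simp_all
  then have "?T A C - ?T C A = 0" "?T A D - ?T C B = mat 1" "?T B C - ?T D A = - mat 1" "?T B D - ?T D B = 0"
    by (metis cmat_diff cmat_mult cmat_transpose cmat_zero cmat_one cmat_uminus)+
  then have e: "?T A C = ?T C A" "?T B D = ?T D B" "?T A D = ?T C B + mat 1" "?T B C = ?T D A - mat 1"
    by (simp_all add: algebra_simps)
  have expand: "cinner (cmat X *v x + cmat Y *v y) (cmat Z *v x + cmat W *v y)
      = cinner x (?T X Z *v x) + cinner x (?T X W *v y) + cinner y (?T Y Z *v x) + cinner y (?T Y W *v y)"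
    for X Y Z W
    by (simp add: cinner_add_left cinner_add_right cinner_cmat_left matrix_vector_right_distrib
        matrix_vector_mul_assoc)
  show ?thesis
    unfolding expand e
    by (simp add: matrix_vector_mult_add_rdistrib matrix_vector_mult_diff_rdistrib
        cinner_add_right cinner_diff_right)
qed

lemma siegel_Im_cinner_pos:
  assumes \<tau>: "\<tau> \<in> siegel" and "v \<noteq> 0"
  shows "Im (cinner v (\<tau> *v v)) > 0"
proof -
  define a where "a = (\<chi> i. Re (v $ i))"
  define b where "b = (\<chi> i. Im (v $ i))"
  define Y where "Y = cim \<tau>"
  have pos: "z \<noteq> 0 \<Longrightarrow> z \<bullet> (Y *v z) > 0" for z using \<tau> unfolding siegel_def Y_def by simp
  have sym: "\<tau> $ i $ j = \<tau> $ j $ i" for i j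
    using \<tau> unfolding siegel_def by (metis (mono_tags, lifting) mem_Collect_eq transpose_def vec_lambda_beta)
  have "Im (cinner v (\<tau> *v v)) = (\<Sum>i\<in>UNIV. \<Sum>j\<in>UNIV. Im (cnj (v $ i) * \<tau> $ i $ j * v $ j))"
    unfolding cinner_def matrix_vector_mult_def by (simp add: Im_sum sum_distrib_left mult_ac)
  also have "\<dots> = (\<Sum>i\<in>UNIV. \<Sum>j\<in>UNIV. Im (\<tau> $ i $ j) * (a $ i * a $ j + b $ i * b $ j))
      + (\<Sum>i\<in>UNIV. \<Sum>j\<in>UNIV. Re (\<tau> $ i $ j) * (a $ i * b $ j))
      - (\<Sum>i\<in>UNIV. \<Sum>j\<in>UNIV. Re (\<tau> $ i $ j) * (b $ i * a $ j))"
    unfolding a_def b_def by (simp add: sum.distrib sum_subtractf algebra_simps)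
  also have "(\<Sum>i\<in>UNIV. \<Sum>j\<in>UNIV. Re (\<tau> $ i $ j) * (b $ i * a $ j))
      = (\<Sum>i\<in>UNIV. \<Sum>j\<in>UNIV. Re (\<tau> $ i $ j) * (a $ i * b $ j))"
    by (subst sum.swap) (simp add: sym mult_ac)
  also have "(\<Sum>i\<in>UNIV. \<Sum>j\<in>UNIV. Im (\<tau> $ i $ j) * (a $ i * a $ j + b $ i * b $ j))
      = a \<bullet> (Y *v a) + b \<bullet> (Y *v b)"
    unfolding Y_def cim_def inner_vec_def matrix_vector_mult_def
    by (simp add: sum.distrib sum_distrib_left algebra_simps)
  finally have Im_eq: "Im (cinner v (\<tau> *v v)) = a \<bullet> (Y *v a) + b \<bullet> (Y *v b)" by simp
  have nonneg: "z \<bullet> (Y *v z) \<ge> 0" for z using pos[of z] by (cases "z = 0") auto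
  have "a \<noteq> 0 \<or> b \<noteq> 0" using \<open>v \<noteq> 0\<close> by (auto simp: a_def b_def vec_eq_iff complex_eq_iff)
  then show ?thesis unfolding Im_eq using pos nonneg by (meson add_nonneg_pos add_pos_nonneg)
qed

text \<open>For \<open>(C\<tau> + D) v = 0\<close> the symplectic identity makes \<open>v\<^sup>* \<tau> v\<close> real, contradicting
  \<open>Im \<tau> > 0\<close>.\<close>
lemma det_aut_factor_nonzero:
  assumes \<gamma>: "\<gamma> \<in> Sp" and \<tau>: "\<tau> \<in> siegel"
  shows "det (aut_factor \<gamma> \<tau>) \<noteq> 0"
proof -
  obtain A B C D where \<gamma>_eq: "\<gamma> = (A, B, C, D)" by (rule prod_cases4)
  have ker: "v = 0" if "aut_factor \<gamma> \<tau> *v v = 0" for v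
  proof (rule ccontr)
    assume "v \<noteq> 0"
    have "cmat C *v (\<tau> *v v) + cmat D *v v = 0"
      using that by (simp add: \<gamma>_eq aut_factor_def matrix_vector_mul_assoc matrix_vector_mult_add_rdistrib)
    then have "cinner (\<tau> *v v) v = cinner v (\<tau> *v v)"
      using symplectic_form_invariant[OF assms(1)[unfolded \<gamma>_eq], of "\<tau> *v v" v] by simp
    then have "Im (cinner v (\<tau> *v v)) = 0"
      using cinner_commute[of "\<tau> *v v" v] by (metis cnj.simps(2) neg_equal_zero)
    then show False using siegel_Im_cinner_pos[OF \<tau> \<open>v \<noteq> 0\<close>] by simp
  qed
  have "invertible (aut_factor \<gamma> \<tau>)"
    using ker invertible_left_inverse matrix_left_invertible_ker by blast
  then show ?thesis by (simp add: invertible_det_nz)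
qed

section \<open>Modularity of the star product\<close>

definition star_dual :: "nat \<Rightarrow> 'n::{finite,linorder} wmat \<Rightarrow> 'n wmat" where
  "star_dual p S = (\<lambda>I J. if I \<in> Pp p \<and> J \<in> Pp p then
      (-1) ^ (sum_elems I + sum_elems J) * S (UNIV - I) (UNIV - J) else 0)"

lemma star_prod_eq_star_dual: "star_prod A k = star_dual (CARD('n) - k) (sqcap_prod A k)"
  for A :: "nat \<Rightarrow> ((complex, 'n::{finite,linorder}) vec, 'n) vec"
  by (simp add: star_prod_def star_dual_def)

lemma star_dual_scale: "star_dual p (\<lambda>H K. c * S H K) = (\<lambda>H K. c * star_dual p S H K)"
  by (simp add: star_dual_def fun_eq_iff)

lemma bij_betw_Compl_Pp:
  "CARD('n::finite) = p + k \<Longrightarrow> bij_betw (\<lambda>R. UNIV - R) (Pp p :: 'n set set) (Pp k)"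
  by (rule bij_betwI[where g = "\<lambda>R. UNIV - R"]) (auto simp: Pp_def card_Diff_subset)

text \<open>Jacobi's formula turns the congruence by \<open>\<And>\<^sup>k M\<close> on complementary index sets into
  the congruence by \<open>det M \<cdot> (\<And>\<^sup>p M)\<^sup>-\<^sup>1\<close>.\<close>
lemma star_dual_wconj:
  fixes M :: "((complex, 'n::{finite,linorder}) vec, 'n) vec"
  assumes d: "det M \<noteq> 0" and card: "CARD('n) = p + k" and H: "H \<in> Pp p" and K: "K \<in> Pp p"
  shows "star_dual p (wconj k M S) H K
    = det M ^ 2 * wmult p (wmult p (wtrans (ext_pow_inv p M)) (star_dual p S)) (ext_pow_inv p M) H K"
proof -
  define T where "T = (\<lambda>R R'. det_sub M (UNIV - H) (UNIV - R) * S (UNIV - R) (UNIV - R')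
      * det_sub M (UNIV - K) (UNIV - R'))"
  have compl: "bij_betw (\<lambda>R. UNIV - R) (Pp p :: 'n set set) (Pp k)" by (rule bij_betw_Compl_Pp[OF card])
  have "wmult p (wmult p (wtrans (ext_pow_inv p M)) (star_dual p S)) (ext_pow_inv p M) H K
      = (\<Sum>R'\<in>Pp p. \<Sum>R\<in>Pp p. (-1) ^ (sum_elems H + sum_elems K) / det M ^ 2 * T R R')"
    unfolding wmult_def wtrans_def sum_distrib_right
  proof (intro sum.cong refl)
    fix R R' :: "'n set" assume "R \<in> Pp p" "R' \<in> Pp p"
    moreover have "(-1::complex) ^ (sum_elems R + sum_elems H) * (-1) ^ (sum_elems R + sum_elems R')
        * (-1) ^ (sum_elems R' + sum_elems K) = (-1) ^ (sum_elems H + sum_elems K)"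
      by (simp add: power_add mult_ac flip: power_mult_distrib)
    ultimately show "ext_pow_inv p M R H * star_dual p S R R' * ext_pow_inv p M R' K
        = (-1) ^ (sum_elems H + sum_elems K) / det M ^ 2 * T R R'"
      using H K by (simp add: ext_pow_inv_def star_dual_def T_def power2_eq_square field_simps)
  qed
  also have "\<dots> = (-1) ^ (sum_elems H + sum_elems K) / det M ^ 2 * (\<Sum>R\<in>Pp p. \<Sum>R'\<in>Pp p. T R R')"
    by (subst sum.swap) (simp add: sum_distrib_left)
  also have "(\<Sum>R\<in>Pp p. \<Sum>R'\<in>Pp p. T R R') = wconj k M S (UNIV - H) (UNIV - K)"
    unfolding T_def wconj_eq[OF bij_betwE[OF compl, rule_format, OF H] bij_betwE[OF compl, rule_format, OF K]]
    by (simp add: sum.reindex_bij_betw[OF compl, symmetric] sum_distrib_left mult_ac)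
  finally show ?thesis
    using d H K by (simp add: star_dual_def power_add)
qed

theorem proposition4p1:
  fixes \<Gamma> :: "'n::{finite,linorder} blk set"
    and A :: "nat \<Rightarrow> ((complex, 'n) vec, 'n) vec \<Rightarrow> ((complex, 'n) vec, 'n) vec"
    and k :: nat
  assumes "CARD('n) \<ge> 2"
    and "1 \<le> k" and "k < CARD('n)"
    and "congruence_subgroup \<Gamma>"
    and "\<And>i. 1 \<le> i \<Longrightarrow> i \<le> k \<Longrightarrow> modular_rho1 \<Gamma> (A i)"
  shows "\<forall>\<gamma>\<in>\<Gamma>. \<forall>\<tau>\<in>siegel.
    (let M = aut_factor \<gamma> \<tau>; p = CARD('n) - k; W = ext_pow p M in
      \<forall>H\<in>Pp p. \<forall>K\<in>Pp p.
        star_prod (\<lambda>i. A i (sp_act \<gamma> \<tau>)) k H K =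
        det M ^ (k + 2) *
          wmult p (wmult p (winv p (wtrans W)) (star_prod (\<lambda>i. A i \<tau>) k)) (winv p W) H K)"
proof (intro ballI)
  fix \<gamma> and \<tau> :: "((complex, 'n) vec, 'n) vec" assume \<gamma>: "\<gamma> \<in> \<Gamma>" and \<tau>: "\<tau> \<in> siegel"
  define M where "M = aut_factor \<gamma> \<tau>"
  define p where "p = CARD('n) - k"
  have card: "CARD('n) = p + k" using assms(3) by (simp add: p_def)
  have "\<gamma> \<in> Sp" using \<gamma> assms(4) by (auto simp: congruence_subgroup_def subgroup_Sp_def)
  then have d: "det M \<noteq> 0" unfolding M_def using \<tau> by (rule det_aut_factor_nonzero)
  have "A i (sp_act \<gamma> \<tau>) = cscale (det M) (M ** A i \<tau> ** transpose M)" if "1 \<le> i" "i \<le> k" for i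
    using assms(5)[OF that] \<gamma> \<tau> unfolding modular_rho1_def M_def by blast
  then have congr: "sqcap_prod (\<lambda>i. A i (sp_act \<gamma> \<tau>)) k
      = (\<lambda>H K. det M ^ k * wconj k M (sqcap_prod (\<lambda>i. A i \<tau>) k) H K)"
    by (rule sqcap_prod_congruence[OF _ assms(2) order.refl])
  show "let M = aut_factor \<gamma> \<tau>; p = CARD('n) - k; W = ext_pow p M in
      \<forall>H\<in>Pp p. \<forall>K\<in>Pp p.
        star_prod (\<lambda>i. A i (sp_act \<gamma> \<tau>)) k H K =
        det M ^ (k + 2) * wmult p (wmult p (winv p (wtrans W)) (star_prod (\<lambda>i. A i \<tau>) k)) (winv p W) H K"
    unfolding Let_def star_prod_eq_star_dual M_def[symmetric] p_def[symmetric]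
      winv_ext_pow[OF d] winv_wtrans_ext_pow[OF d] congr star_dual_scale
    by (simp add: star_dual_wconj[OF d card] power2_eq_square mult_ac)
qed

end
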